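(* Let $1\le k<\lfloor n/2\rfloor$. Then $$\operatorname{Hdepth}_1M(n,k)\le n-\left\lceil\frac{n-k}{k+1}\right\rceil.$$
   Context: $K$ is a field, $R=K[X_1,\dots,X_n]$ with the standard grading ($\deg X_i=1$). $M(n,k)$ is the $k$-th syzygy module of $K=R/(X_1,\dots,X_n)$ in the Koszul complex: the image of $\partial:\bigwedge^kR^n\to\bigwedge^{k-1}R^n$, $\partial(e_{i_1}\wedge\dots\wedge e_{i_k})=\sum_{r=1}^k(-1)^{r+1}X_{i_r}e_{i_1}\wedge\dots\widehat{e_{i_r}}\dots\wedge e_{i_k}$, where $e_{i_1}\wedge\dots\wedge e_{i_k}$ has degree $k$. A graded retract of $R$ is a $K$-subalgebra generated by a set of linear forms. A Hilbert decomposition of $M$ is a finite family $(S_i,s_i)$, $s_i\in\mathbb{Z}$, $S_i$ graded retracts, with $M\cong\bigoplus_iS_i(-s_i)$ as graded $K$-vector spaces; its depth is $\min_i\dim S_i$; $\operatorname{Hdepth}_1M$ is the maximal depth of such a decomposition. *)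

theory Defs
  imports Complex_Main "HOL-Library.Poly_Mapping"
begin

(* The variable X_i (i = 1..n in the paper) is index i-1 here (indices 0..<n).*)

type_synonym 'a mpoly = "(nat \<Rightarrow>\<^sub>0 nat) \<Rightarrow>\<^sub>0 'a"

definition mpVar :: "nat \<Rightarrow> 'a::field mpoly" where
  "mpVar i = Poly_Mapping.single (Poly_Mapping.single i 1) 1"

definition mpConst :: "'a::field \<Rightarrow> 'a mpoly" where
  "mpConst c = Poly_Mapping.single 0 c"

definition mon_deg :: "(nat \<Rightarrow>\<^sub>0 nat) \<Rightarrow> nat" where
  "mon_deg m = (\<Sum>i\<in>Poly_Mapping.keys m. Poly_Mapping.lookup m i)"

definition in_R :: "nat \<Rightarrow> 'a::field mpoly \<Rightarrow> bool" where
  "in_R n p \<longleftrightarrow> (\<forall>m\<in>Poly_Mapping.keys p. Poly_Mapping.keys m \<subseteq> {..<n})"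

(* p is homogeneous of (integer) degree d (0 is homogeneous of every degree)*)
definition homog :: "int \<Rightarrow> 'a::field mpoly \<Rightarrow> bool" where
  "homog d p \<longleftrightarrow> (\<forall>m\<in>Poly_Mapping.keys p. int (mon_deg m) = d)"

(* Elements of the free module \<And>^{k-1} R^n are represented as coefficient
  functions I \<mapsto> f_I on index sets I (basis element e_I, I a (k-1)-subset).
  koszul_coeff J I is the coefficient of e_I in \<partial>(e_J):
  if J = I \<union> {j}, j \<notin> I, then (-1)^(r+1) X_j where r is the position of j in J.*)
definition koszul_coeff :: "nat set \<Rightarrow> nat set \<Rightarrow> 'a::field mpoly" where
  "koszul_coeff J I =
     (if I \<subseteq> J \<and> card (J - I) = 1
      then mpConst ((-1) ^ card {i\<in>J. i < the_elem (J - I)}) * mpVar (the_elem (J - I))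
      else 0)"

(* M(n,k) = image of \<partial> : \<And>^k R^n \<rightarrow> \<And>^{k-1} R^n*)
definition syz :: "nat \<Rightarrow> nat \<Rightarrow> (nat set \<Rightarrow> 'a::field mpoly) set" where
  "syz n k = {v. \<exists>a. (\<forall>J. in_R n (a J)) \<and>
      v = (\<lambda>I. \<Sum>J\<in>{J. J \<subseteq> {..<n} \<and> card J = k}. a J * koszul_coeff J I)}"

(* Degree d component of M(n,k); e_I (|I| = k-1) has degree k-1.*)
definition syz_piece :: "nat \<Rightarrow> nat \<Rightarrow> int \<Rightarrow> (nat set \<Rightarrow> 'a::field mpoly) set" where
  "syz_piece n k d = {v\<in>syz n k. \<forall>I. homog (d - (int k - 1)) (v I)}"

inductive_set alg_gen :: "'a::field mpoly set \<Rightarrow> 'a mpoly set" for G where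
  const: "mpConst c \<in> alg_gen G"
| gen: "g \<in> G \<Longrightarrow> g \<in> alg_gen G"
| add: "p \<in> alg_gen G \<Longrightarrow> q \<in> alg_gen G \<Longrightarrow> p + q \<in> alg_gen G"
| mult: "p \<in> alg_gen G \<Longrightarrow> q \<in> alg_gen G \<Longrightarrow> p * q \<in> alg_gen G"

definition linear_forms :: "nat \<Rightarrow> 'a::field mpoly set" where
  "linear_forms n = {p. in_R n p \<and> homog 1 p}"

definition graded_retract :: "nat \<Rightarrow> 'a::field mpoly set \<Rightarrow> bool" where
  "graded_retract n S \<longleftrightarrow> (\<exists>G \<subseteq> linear_forms n. S = alg_gen G)"

definition piece :: "'a::field mpoly set \<Rightarrow> int \<Rightarrow> 'a mpoly set" where
  "piece S d = {p\<in>S. homog d p}"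

(* Dimension of a graded retract S (a polynomial ring over K in as many
  variables as the K-dimension of its space of linear forms S_1).*)
definition retract_dim :: "'a::field mpoly set \<Rightarrow> nat" where
  "retract_dim S = vector_space.dim (\<lambda>c p. mpConst c * p) (piece S 1)"

(* A Hilbert decomposition of M(n,k): a finite family (S_i, s_i), given as a list,
  with M \<cong> \<Oplus>_i S_i(-s_i) as graded K-vector spaces, i.e. for every degree d a
  K-linear bijection M_d \<rightarrow> \<Oplus>_i (S_i)_{d - s_i}.*)
definition dsum_piece :: "('a::field mpoly set \<times> int) list \<Rightarrow> int \<Rightarrow> (nat \<Rightarrow> 'a mpoly) set" where
  "dsum_piece D d = {g. (\<forall>i<length D. g i \<in> piece (fst (D ! i)) (d - snd (D ! i)))
                       \<and> (\<forall>i\<ge>length D. g i = 0)}"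

definition hilbert_decomp :: "nat \<Rightarrow> nat \<Rightarrow> ('a::field mpoly set \<times> int) list \<Rightarrow> bool" where
  "hilbert_decomp n k D \<longleftrightarrow>
     (\<forall>i<length D. graded_retract n (fst (D ! i))) \<and>
     (\<forall>d::int. \<exists>f. bij_betw f (syz_piece n k d) (dsum_piece D d) \<and>
        (\<forall>x\<in>syz_piece n k d. \<forall>y\<in>syz_piece n k d.
            f (\<lambda>I. x I + y I) = (\<lambda>i. f x i + f y i)) \<and>
        (\<forall>c. \<forall>x\<in>syz_piece n k d. f (\<lambda>I. mpConst c * x I) = (\<lambda>i. mpConst c * f x i)))"

definition decomp_depth :: "('a::field mpoly set \<times> int) list \<Rightarrow> nat" where
  "decomp_depth D = Min {retract_dim (fst (D ! i)) | i. i < length D}"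

(* Hdepth_1 M(n,k): the maximal depth of a Hilbert decomposition. The type
  argument fixes the field K.*)
definition Hdepth1_syz :: "'a::field itself \<Rightarrow> nat \<Rightarrow> nat \<Rightarrow> nat" where
  "Hdepth1_syz _ n k = Max {decomp_depth D | D :: ('a mpoly set \<times> int) list. hilbert_decomp n k D}"

end

theory Submission
  imports Defs "HOL-Library.Function_Algebras"
begin

(* In every degree d a Hilbert decomposition (S_i, s_i) of M = M(n,k) is a linear isomorphism
   M_d = (+)_i (S_i)_(d - s_i).  Since M vanishes below degree k, no summand is shifted below k.
   In degree k only the summands with s_i = k contribute, each by a line, and M_k has the
   (n choose k) independent elements de_J, so there are at least (n choose k) such summands.  In
   degree k + 1 each of them contributes its space of linear forms, of dimension at least the
   depth, while M_(k+1) is spanned by the n (n choose k) - (n choose (k+1)) elements X_i de_J with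
   i >= min J.  Hence (n choose k) * depth <= n (n choose k) - (n choose (k+1)), which is the bound
   because (k+1) (n choose (k+1)) = (n-k) (n choose k).
   Both facts about M come from its standard form: every element of M is d b for a unique
   coefficient vector b whose e_J-coefficient only involves the X_i with i >= min J; this also
   provides a Hilbert decomposition, so the maximal depth exists. *)

section \<open>Polynomials\<close>

abbreviation mon_var :: "nat \<Rightarrow> nat \<Rightarrow>\<^sub>0 nat" where
  "mon_var j \<equiv> Poly_Mapping.single j 1"

lemma fun_sum_apply: "(\<Sum>x\<in>A. f x) i = (\<Sum>x\<in>A. f x i)"
  by (induction A rule: infinite_finite_induct) auto

lemma poly_mapping_sum_single:
  "(p :: 'b \<Rightarrow>\<^sub>0 'c::comm_monoid_add) =
     (\<Sum>m\<in>Poly_Mapping.keys p. Poly_Mapping.single m (Poly_Mapping.lookup p m))"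
proof (rule poly_mapping_eqI)
  fix w
  have "Poly_Mapping.lookup (\<Sum>m\<in>Poly_Mapping.keys p. Poly_Mapping.single m (Poly_Mapping.lookup p m)) w
     = (\<Sum>m\<in>Poly_Mapping.keys p. (Poly_Mapping.lookup p m when m = w))"
    by (simp add: lookup_sum lookup_single)
  also have "\<dots> = Poly_Mapping.lookup p w"
    by (cases "w \<in> Poly_Mapping.keys p") (auto simp: when_def in_keys_iff)
  finally show "Poly_Mapping.lookup p w =
      Poly_Mapping.lookup (\<Sum>m\<in>Poly_Mapping.keys p. Poly_Mapping.single m (Poly_Mapping.lookup p m)) w"
    by simp
qed

lemma lookup_mult_single_add:
  fixes p :: "'a::field mpoly"
  shows "Poly_Mapping.lookup (p * Poly_Mapping.single m c) (x + m) = Poly_Mapping.lookup p x * c"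
proof -
  have inner: "(\<Sum>q. (c when m = q) when x + m = l + q) = (c when x + m = l + m)" for l
  proof -
    have "(\<lambda>q. (c when m = q) when x + m = l + q) = (\<lambda>q. if m = q then (c when x + m = l + q) else 0)"
      by (auto simp: when_def fun_eq_iff)
    then show ?thesis by (simp only:) (rule Sum_any.delta')
  qed
  have "Poly_Mapping.lookup (p * Poly_Mapping.single m c) (x + m)
     = (\<Sum>l. Poly_Mapping.lookup p l * (c when x + m = l + m))"
    by (simp add: lookup_mult lookup_single inner)
  also have "\<dots> = (\<Sum>l. (Poly_Mapping.lookup p l * c when l = x))"
    by (intro Sum_any.cong) (auto simp: when_def)
  finally show ?thesis by simp
qed

lemma lookup_mult_single_eq_0:
  fixes p :: "'a::field mpoly"
  assumes "\<And>x. w \<noteq> x + m"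
  shows "Poly_Mapping.lookup (p * Poly_Mapping.single m c) w = 0"
proof (rule ccontr)
  assume "Poly_Mapping.lookup (p * Poly_Mapping.single m c) w \<noteq> 0"
  then have "w \<in> Poly_Mapping.keys (p * Poly_Mapping.single m c)" by (simp add: in_keys_iff)
  then show False using keys_mult[of p "Poly_Mapping.single m c"] assms
    by (auto split: if_splits)
qed

lemma mpConst_mult: "mpConst a * mpConst b = mpConst (a * b)"
  by (simp add: mpConst_def mult_single)

lemma mpConst_one [simp]: "mpConst 1 = 1"
  by (simp add: mpConst_def)

lemma mpConst_zero [simp]: "mpConst 0 = 0"
  by (simp add: mpConst_def)

lemma mpConst_add: "mpConst (a + b) = mpConst a + mpConst b"
  by (simp add: mpConst_def single_add)

lemma mpConst_mult_single: "mpConst c * Poly_Mapping.single m a = Poly_Mapping.single m (c * a)"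
  by (simp add: mpConst_def mult_single)

lemma mpConst_mult_mpVar: "mpConst c * mpVar j = Poly_Mapping.single (mon_var j) c"
  by (simp add: mpVar_def mpConst_mult_single)

lemma mpVar_power: "mpVar x ^ e = (Poly_Mapping.single (Poly_Mapping.single x e) 1 :: 'a::field mpoly)"
proof (induction e)
  case (Suc e)
  then show ?case
    by (simp add: mpVar_def mult_single single_add[symmetric] add.commute)
qed simp

lemma mon_deg_eq_sum:
  "finite S \<Longrightarrow> Poly_Mapping.keys m \<subseteq> S \<Longrightarrow> mon_deg m = (\<Sum>i\<in>S. Poly_Mapping.lookup m i)"
  unfolding mon_deg_def by (rule sum.mono_neutral_left) (auto simp: in_keys_iff)

lemma mon_deg_add: "mon_deg (a + b) = mon_deg a + mon_deg b"
proof -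
  let ?S = "Poly_Mapping.keys a \<union> Poly_Mapping.keys b"
  have "mon_deg (a + b) = (\<Sum>i\<in>?S. Poly_Mapping.lookup (a + b) i)"
    using keys_add[of a b] by (intro mon_deg_eq_sum) auto
  also have "\<dots> = (\<Sum>i\<in>?S. Poly_Mapping.lookup a i) + (\<Sum>i\<in>?S. Poly_Mapping.lookup b i)"
    by (simp add: lookup_add sum.distrib)
  also have "\<dots> = mon_deg a + mon_deg b"
    by (subst (1 2) mon_deg_eq_sum[where S = ?S]) auto
  finally show ?thesis .
qed

lemma mon_deg_single [simp]: "mon_deg (Poly_Mapping.single j e) = e"
  by (cases "e = 0") (simp_all add: mon_deg_def)

lemma mon_deg_zero [simp]: "mon_deg 0 = 0"
  by (simp add: mon_deg_def)

lemma mon_deg_eq_0: "mon_deg m = 0 \<Longrightarrow> m = 0"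
  unfolding mon_deg_def
  by (metis (no_types, lifting) finite_keys in_keys_iff keys_eq_empty sum_eq_0_iff ex_in_conv)

lemma mon_deg_eq_1_iff: "mon_deg w = 1 \<longleftrightarrow> (\<exists>j. w = mon_var j)"
proof
  assume deg: "mon_deg w = 1"
  then have "Poly_Mapping.keys w \<noteq> {}"
    by (auto simp: mon_deg_def)
  then obtain j where j: "j \<in> Poly_Mapping.keys w"
    by blast
  have "Poly_Mapping.lookup w j + (\<Sum>i\<in>Poly_Mapping.keys w - {j}. Poly_Mapping.lookup w i) = 1"
    using deg j by (simp add: mon_deg_def sum.remove)
  moreover have "Poly_Mapping.lookup w j \<ge> 1"
    using j by (simp add: in_keys_iff)
  ultimately have "Poly_Mapping.lookup w j = 1"
    and rest: "(\<Sum>i\<in>Poly_Mapping.keys w - {j}. Poly_Mapping.lookup w i) = 0"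
    by linarith+
  have "Poly_Mapping.lookup w i = 0" if "i \<noteq> j" for i
  proof (cases "i \<in> Poly_Mapping.keys w")
    case True
    then show ?thesis using rest that by (simp add: sum_eq_0_iff)
  qed (simp add: in_keys_iff)
  then have "w = mon_var j"
    by (intro poly_mapping_eqI) (auto simp: lookup_single when_def \<open>Poly_Mapping.lookup w j = 1\<close>)
  then show "\<exists>j. w = mon_var j" ..
qed auto

lemma single_eq_single_iff [simp]:
  "(e::nat) \<noteq> 0 \<Longrightarrow> Poly_Mapping.single i e = Poly_Mapping.single j e \<longleftrightarrow> i = j"
  by (metis lookup_single_eq lookup_single_not_eq)

definition vars_in :: "nat set \<Rightarrow> 'a::field mpoly \<Rightarrow> bool" where
  "vars_in A p \<longleftrightarrow> (\<forall>m\<in>Poly_Mapping.keys p. Poly_Mapping.keys m \<subseteq> A)"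

lemma in_R_iff_vars_in: "in_R n p = vars_in {..<n} p"
  by (simp add: in_R_def vars_in_def)

lemma vars_in_0 [simp]: "vars_in A 0"
  by (simp add: vars_in_def)

lemma vars_in_add: "vars_in A p \<Longrightarrow> vars_in A q \<Longrightarrow> vars_in A (p + q)"
  using keys_add[of p q] by (auto simp: vars_in_def)

lemma vars_in_mult:
  assumes "vars_in A p" "vars_in A q"
  shows "vars_in A (p * q)"
  unfolding vars_in_def
proof
  fix m assume "m \<in> Poly_Mapping.keys (p * q)"
  then obtain a b where "m = a + b" "a \<in> Poly_Mapping.keys p" "b \<in> Poly_Mapping.keys q"
    using keys_mult[of p q] by blast
  then show "Poly_Mapping.keys m \<subseteq> A"
    using assms keys_add[of a b] unfolding vars_in_def by blast
qed

lemma vars_in_single: "Poly_Mapping.keys m \<subseteq> A \<Longrightarrow> vars_in A (Poly_Mapping.single m c)"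
  by (simp add: vars_in_def)

lemma vars_in_mpConst: "vars_in A (mpConst c)"
  by (simp add: mpConst_def vars_in_def)

lemma vars_in_mpVar: "j \<in> A \<Longrightarrow> vars_in A (mpVar j)"
  by (simp add: mpVar_def vars_in_def)

lemma vars_in_mono: "vars_in A p \<Longrightarrow> A \<subseteq> B \<Longrightarrow> vars_in B p"
  by (auto simp: vars_in_def)

lemma homog_0 [simp]: "homog d 0"
  by (simp add: homog_def)

lemma homog_add: "homog d p \<Longrightarrow> homog d q \<Longrightarrow> homog d (p + q)"
  using keys_add[of p q] by (auto simp: homog_def)

lemma homog_sum: "(\<And>x. x \<in> S \<Longrightarrow> homog d (f x)) \<Longrightarrow> homog d (\<Sum>x\<in>S. f x)"
  by (induction S rule: infinite_finite_induct) (auto intro: homog_add)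

lemma homog_mult:
  assumes "homog a p" "homog b q"
  shows "homog (a + b) (p * q)"
  unfolding homog_def
proof
  fix m assume "m \<in> Poly_Mapping.keys (p * q)"
  then obtain x y where "m = x + y" "x \<in> Poly_Mapping.keys p" "y \<in> Poly_Mapping.keys q"
    using keys_mult[of p q] by blast
  then show "int (mon_deg m) = a + b"
    using assms by (auto simp: homog_def mon_deg_add)
qed

lemma homog_single: "int (mon_deg m) = d \<Longrightarrow> homog d (Poly_Mapping.single m c)"
  by (simp add: homog_def)

lemma homog_mpConst: "homog 0 (mpConst c)"
  by (simp add: mpConst_def homog_def)

lemma homog_mpConst_mult: "homog d p \<Longrightarrow> homog d (mpConst c * p)"
  using homog_mult[OF homog_mpConst[of c], of d p] by simp

lemma homog_mpVar: "homog 1 (mpVar j)"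
  by (simp add: mpVar_def homog_def)

lemma homog_neg_eq_0: "d < 0 \<Longrightarrow> homog d p \<Longrightarrow> p = 0"
  by (metis homog_def ex_in_conv keys_eq_empty of_nat_0_le_iff not_le)

lemma homog_0_eq_mpConst:
  assumes "homog 0 p"
  shows "p = mpConst (Poly_Mapping.lookup p 0)"
proof (rule poly_mapping_eqI)
  have "Poly_Mapping.keys p \<subseteq> {0}"
    using assms mon_deg_eq_0 by (auto simp: homog_def)
  then show "Poly_Mapping.lookup p w = Poly_Mapping.lookup (mpConst (Poly_Mapping.lookup p 0)) w" for w
    by (cases "w = 0") (auto simp: mpConst_def lookup_single in_keys_iff)
qed

lemma homog_1_eq_linear_comb:
  assumes "homog 1 p" and "vars_in A p" and "finite A"
  shows "p = (\<Sum>i\<in>A. mpConst (Poly_Mapping.lookup p (mon_var i)) * mpVar i)"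
proof (rule poly_mapping_eqI)
  fix w
  have rhs: "Poly_Mapping.lookup (\<Sum>i\<in>A. mpConst (Poly_Mapping.lookup p (mon_var i)) * mpVar i) w
      = (\<Sum>i\<in>A. (Poly_Mapping.lookup p (mon_var i) when mon_var i = w))"
    by (simp add: lookup_sum mpConst_mult_mpVar lookup_single)
  show "Poly_Mapping.lookup p w =
      Poly_Mapping.lookup (\<Sum>i\<in>A. mpConst (Poly_Mapping.lookup p (mon_var i)) * mpVar i) w"
  proof (cases "w \<in> Poly_Mapping.keys p")
    case True
    then obtain j where w: "w = mon_var j"
      using assms(1) mon_deg_eq_1_iff by (auto simp: homog_def)
    then have "j \<in> A"
      using True assms(2) by (auto simp: vars_in_def)
    have "(\<Sum>i\<in>A. (Poly_Mapping.lookup p (mon_var i) when mon_var i = w)) =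
        (\<Sum>i\<in>A. if i = j then Poly_Mapping.lookup p w else 0)"
      by (intro sum.cong refl) (auto simp: when_def w)
    also have "\<dots> = Poly_Mapping.lookup p w"
      using \<open>j \<in> A\<close> assms(3) by simp
    finally show ?thesis
      using rhs by simp
  next
    case False
    then have "(\<Sum>i\<in>A. (Poly_Mapping.lookup p (mon_var i) when mon_var i = w)) = 0"
      by (intro sum.neutral) (auto simp: when_def in_keys_iff)
    then show ?thesis
      using rhs False by (simp add: in_keys_iff)
  qed
qed

definition hcomp :: "int \<Rightarrow> 'a::field mpoly \<Rightarrow> 'a mpoly" where
  "hcomp e p = (\<Sum>m\<in>{m\<in>Poly_Mapping.keys p. int (mon_deg m) = e}.
                   Poly_Mapping.single m (Poly_Mapping.lookup p m))"

lemma lookup_hcomp: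
  "Poly_Mapping.lookup (hcomp e p) w = (if int (mon_deg w) = e then Poly_Mapping.lookup p w else 0)"
proof -
  have "Poly_Mapping.lookup (hcomp e p) w =
      (\<Sum>m\<in>{m\<in>Poly_Mapping.keys p. int (mon_deg m) = e}. (Poly_Mapping.lookup p m when m = w))"
    by (simp add: hcomp_def lookup_sum lookup_single)
  also have "\<dots> = (if int (mon_deg w) = e then Poly_Mapping.lookup p w else 0)"
    by (cases "w \<in> Poly_Mapping.keys p") (auto simp: when_def in_keys_iff)
  finally show ?thesis .
qed

lemma hcomp_add: "hcomp e (p + q) = hcomp e p + hcomp e q"
  by (rule poly_mapping_eqI) (simp add: lookup_hcomp lookup_add)

lemma hcomp_0 [simp]: "hcomp e 0 = 0"
  by (simp add: hcomp_def)

lemma hcomp_sum: "hcomp e (\<Sum>x\<in>S. f x) = (\<Sum>x\<in>S. hcomp e (f x))"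
  by (induction S rule: infinite_finite_induct) (simp_all add: hcomp_add)

lemma hcomp_homog: "homog e p \<Longrightarrow> hcomp e p = p"
  by (rule poly_mapping_eqI) (auto simp: lookup_hcomp homog_def in_keys_iff)

lemma homog_hcomp: "homog e (hcomp e p)"
  by (auto simp: homog_def in_keys_iff lookup_hcomp split: if_splits)

lemma vars_in_hcomp: "vars_in A p \<Longrightarrow> vars_in A (hcomp e p)"
  by (auto simp: vars_in_def in_keys_iff lookup_hcomp split: if_splits)

lemma hcomp_mult_single:
  "hcomp (e + int (mon_deg m)) (p * Poly_Mapping.single m c) = hcomp e p * Poly_Mapping.single m c"
proof (rule poly_mapping_eqI)
  fix w
  show "Poly_Mapping.lookup (hcomp (e + int (mon_deg m)) (p * Poly_Mapping.single m c)) w =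
        Poly_Mapping.lookup (hcomp e p * Poly_Mapping.single m c) w"
  proof (cases "\<exists>x. w = x + m")
    case True
    then obtain x where w: "w = x + m" by blast
    show ?thesis unfolding w lookup_hcomp lookup_mult_single_add by (simp add: mon_deg_add)
  next
    case False
    then show ?thesis by (simp add: lookup_hcomp lookup_mult_single_eq_0)
  qed
qed

lemma alg_gen_sum: "(\<And>x. x \<in> S \<Longrightarrow> f x \<in> alg_gen G) \<Longrightarrow> (\<Sum>x\<in>S. f x) \<in> alg_gen G"
  by (induction S rule: infinite_finite_induct)
    (auto intro: alg_gen.add alg_gen.const[of 0, simplified])

lemma alg_gen_prod: "(\<And>x. x \<in> S \<Longrightarrow> f x \<in> alg_gen G) \<Longrightarrow> (\<Prod>x\<in>S. f x) \<in> alg_gen G"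
  by (induction S rule: infinite_finite_induct)
    (auto intro: alg_gen.mult alg_gen.const[of 1, simplified])

lemma alg_gen_power: "p \<in> alg_gen G \<Longrightarrow> p ^ e \<in> alg_gen G"
  by (induction e) (auto intro: alg_gen.mult alg_gen.const[of 1, simplified])

lemma single_1_eq_prod_mpVar:
  assumes "finite S" "Poly_Mapping.keys m \<subseteq> S"
  shows "Poly_Mapping.single m (1::'a::field) = (\<Prod>i\<in>S. mpVar i ^ Poly_Mapping.lookup m i)"
  using assms
proof (induction S arbitrary: m rule: finite_induct)
  case (insert x S)
  define m' where "m' = m - Poly_Mapping.single x (Poly_Mapping.lookup m x)"
  have lookup_m': "Poly_Mapping.lookup m' i = (if i = x then 0 else Poly_Mapping.lookup m i)" for i
    by (simp add: m'_def lookup_minus lookup_single when_def)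
  have keys_m': "Poly_Mapping.keys m' \<subseteq> S"
  proof
    fix i assume "i \<in> Poly_Mapping.keys m'"
    then have "i \<noteq> x" "i \<in> Poly_Mapping.keys m"
      by (auto simp: in_keys_iff lookup_m' split: if_splits)
    then show "i \<in> S" using insert.prems by auto
  qed
  have m_split: "m' + Poly_Mapping.single x (Poly_Mapping.lookup m x) = m"
    by (rule poly_mapping_eqI) (simp add: lookup_add lookup_m' lookup_single when_def)
  have "Poly_Mapping.single m (1::'a) =
      Poly_Mapping.single m' 1 * Poly_Mapping.single (Poly_Mapping.single x (Poly_Mapping.lookup m x)) 1"
    by (simp add: mult_single m_split)
  also have "\<dots> = (\<Prod>i\<in>S. mpVar i ^ Poly_Mapping.lookup m' i) * mpVar x ^ Poly_Mapping.lookup m x"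
    using insert.IH[OF keys_m'] by (simp add: mpVar_power)
  also have "(\<Prod>i\<in>S. mpVar i ^ Poly_Mapping.lookup m' i) = (\<Prod>i\<in>S. mpVar i ^ Poly_Mapping.lookup m i)"
    using insert.hyps by (intro prod.cong refl) (auto simp: lookup_m')
  finally show ?case
    using insert.hyps by (simp add: mult.commute)
qed simp

lemma alg_gen_mpVar_iff: "p \<in> alg_gen (mpVar ` A) \<longleftrightarrow> vars_in A (p :: 'a::field mpoly)"
proof
  show "p \<in> alg_gen (mpVar ` A) \<Longrightarrow> vars_in A p"
    by (induction rule: alg_gen.induct)
      (auto intro: vars_in_mpConst vars_in_mpVar vars_in_add vars_in_mult)
next
  assume vars: "vars_in A p"
  have monomial: "Poly_Mapping.single m (Poly_Mapping.lookup p m) \<in> alg_gen (mpVar ` A)"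
    if m: "m \<in> Poly_Mapping.keys p" for m
  proof -
    have "Poly_Mapping.single m (Poly_Mapping.lookup p m) =
        mpConst (Poly_Mapping.lookup p m) * Poly_Mapping.single m 1"
      by (simp add: mpConst_mult_single)
    also have "\<dots> = mpConst (Poly_Mapping.lookup p m) *
        (\<Prod>i\<in>Poly_Mapping.keys m. mpVar i ^ Poly_Mapping.lookup m i)"
      using single_1_eq_prod_mpVar[OF finite_keys, of m m, where 'a = 'a] by simp
    also have "\<dots> \<in> alg_gen (mpVar ` A)"
      using vars m unfolding vars_in_def
      by (intro alg_gen.mult alg_gen.const alg_gen_prod alg_gen_power alg_gen.gen) auto
    finally show ?thesis .
  qed
  have "p = (\<Sum>m\<in>Poly_Mapping.keys p. Poly_Mapping.single m (Poly_Mapping.lookup p m))"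
    by (rule poly_mapping_sum_single)
  also have "\<dots> \<in> alg_gen (mpVar ` A)"
    using monomial by (rule alg_gen_sum)
  finally show "p \<in> alg_gen (mpVar ` A)" .
qed

section \<open>The Koszul differential\<close>

interpretation mpoly_space: vector_space "\<lambda>c (p::'a::field mpoly). mpConst c * p"
  by unfold_locales (auto simp: algebra_simps mpConst_add mpConst_mult[symmetric])

interpretation fun_space: vector_space "\<lambda>c (v::'b \<Rightarrow> 'a::field mpoly) i. mpConst c * v i"
  by unfold_locales (auto simp: algebra_simps mpConst_add mpConst_mult[symmetric] fun_eq_iff)

definition koszul_sign :: "nat set \<Rightarrow> nat \<Rightarrow> 'a::field" where
  "koszul_sign S j = (-1) ^ card {i\<in>S. i < j}"

lemma koszul_sign_nonzero [simp]: "koszul_sign S j \<noteq> 0"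
  by (simp add: koszul_sign_def)

lemma koszul_sign_cancel:
  assumes "finite L" "a \<in> L" "b \<in> L" "a < b"
  shows "koszul_sign L a * koszul_sign (L - {a}) b + koszul_sign L b * koszul_sign (L - {b}) a
           = (0::'a::field)"
proof -
  have "{i\<in>L. i < b} = insert a {i\<in>L - {a}. i < b}"
    using assms by auto
  then have "card {i\<in>L. i < b} = Suc (card {i\<in>L - {a}. i < b})"
    using assms(1) by (simp add: card_insert_disjoint)
  moreover have "{i\<in>L - {b}. i < a} = {i\<in>L. i < a}"
    using assms(4) by auto
  ultimately show ?thesis
    by (simp add: koszul_sign_def)
qed

lemma koszul_coeff_Diff_single:
  assumes "j \<in> J"
  shows "koszul_coeff J (J - {j}) = Poly_Mapping.single (mon_var j) (koszul_sign J j)"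
proof -
  have "J - (J - {j}) = {j}"
    using assms by auto
  then show ?thesis
    by (simp add: koszul_coeff_def mpConst_mult_mpVar koszul_sign_def)
qed

lemma koszul_coeff_eq_0:
  assumes "\<not> (\<exists>j\<in>J. I = J - {j})"
  shows "koszul_coeff J I = 0"
proof -
  have "\<not> (I \<subseteq> J \<and> card (J - I) = 1)"
  proof
    assume "I \<subseteq> J \<and> card (J - I) = 1"
    then obtain j where "J - I = {j}" "I \<subseteq> J"
      by (auto simp: card_Suc_eq)
    then have "j \<in> J" "I = J - {j}" by auto
    then show False using assms by blast
  qed
  then show ?thesis
    unfolding koszul_coeff_def by (rule if_not_P)
qed

lemma koszul_coeff_cases:
  "koszul_coeff J I = 0 \<or> (\<exists>j c. koszul_coeff J I = Poly_Mapping.single (mon_var j) c)"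
  by (metis koszul_coeff_eq_0 koszul_coeff_Diff_single)

lemma homog_koszul_coeff: "homog 1 (koszul_coeff J I :: 'a::field mpoly)"
proof -
  consider "koszul_coeff J I = (0 :: 'a mpoly)"
    | j c where "koszul_coeff J I = Poly_Mapping.single (mon_var j) (c :: 'a)"
    using koszul_coeff_cases by blast
  then show ?thesis
    by cases (auto intro: homog_single)
qed

lemma hcomp_mult_koszul_coeff:
  "hcomp (e + 1) (p * koszul_coeff J I) = hcomp e p * koszul_coeff J I"
proof -
  consider "koszul_coeff J I = (0 :: 'a mpoly)"
    | j c where "koszul_coeff J I = Poly_Mapping.single (mon_var j) (c :: 'a)"
    using koszul_coeff_cases by blast
  then show ?thesis
    by cases (use hcomp_mult_single[of e "mon_var _" p] in auto)
qed

text \<open>The two ways of deleting two indices from a monomial basis element cancel: \<open>\<partial>\<^sup>2 = 0\<close>.\<close>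

lemma koszul_coeff_square_cancel:
  fixes v :: "nat \<Rightarrow>\<^sub>0 nat" and c :: "'a::field"
  assumes L: "finite L"
  shows "(\<Sum>l\<in>L. Poly_Mapping.single (v + mon_var l) (c * koszul_sign L l) * koszul_coeff (L - {l}) I) = 0"
proof (cases "\<exists>a b. a \<in> L \<and> b \<in> L \<and> a < b \<and> I = L - {a, b}")
  case True
  then obtain a b where a: "a \<in> L" and b: "b \<in> L" and ab: "a < b" and I: "I = L - {a, b}"
    by blast
  let ?t = "\<lambda>l. Poly_Mapping.single (v + mon_var l) (c * koszul_sign L l) * koszul_coeff (L - {l}) I"
  have "?t l = 0" if "l \<in> L" "l \<notin> {a, b}" for l
  proof -
    have "\<not> (\<exists>m\<in>L - {l}. I = L - {l} - {m})" using that I by auto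
    then show ?thesis by (simp add: koszul_coeff_eq_0)
  qed
  then have "(\<Sum>l\<in>L. ?t l) = (\<Sum>l\<in>{a, b}. ?t l)"
    using a b L by (intro sum.mono_neutral_right) auto
  also have "\<dots> = ?t a + ?t b" using ab by simp
  also have "?t a = Poly_Mapping.single (v + mon_var a + mon_var b)
                      (c * (koszul_sign L a * koszul_sign (L - {a}) b))"
  proof -
    have "I = (L - {a}) - {b}" using I by auto
    then have kc: "koszul_coeff (L - {a}) I = Poly_Mapping.single (mon_var b) (koszul_sign (L - {a}) b)"
      using koszul_coeff_Diff_single[of b "L - {a}"] b ab by simp
    show ?thesis unfolding kc mult_single by (simp add: mult.assoc)
  qed
  also have "?t b = Poly_Mapping.single (v + mon_var a + mon_var b)
                      (c * (koszul_sign L b * koszul_sign (L - {b}) a))"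
  proof -
    have "I = (L - {b}) - {a}" using I by auto
    then have kc: "koszul_coeff (L - {b}) I = Poly_Mapping.single (mon_var a) (koszul_sign (L - {b}) a)"
      using koszul_coeff_Diff_single[of a "L - {b}"] a ab by simp
    show ?thesis unfolding kc mult_single by (simp add: mult.assoc add.commute add.left_commute)
  qed
  finally show ?thesis
    using koszul_sign_cancel[OF L a b ab, where 'a = 'a]
    by (simp add: single_add[symmetric] distrib_left[symmetric])
next
  case False
  have "koszul_coeff (L - {l}) I = (0 :: 'a mpoly)" if "l \<in> L" for l
  proof (rule koszul_coeff_eq_0, rule notI)
    assume "\<exists>m\<in>L - {l}. I = L - {l} - {m}"
    then obtain m where m: "m \<in> L" "m \<noteq> l" "I = L - {l, m}" by auto
    show False
    proof (cases "l < m")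
      case True then show False using False m that by blast
    next
      case False
      then have "m < l" using m by simp
      then show False using \<open>\<not> (\<exists>a b. _)\<close> m that by (metis insert_commute)
    qed
  qed
  then show ?thesis by simp
qed

definition ksets :: "nat \<Rightarrow> nat \<Rightarrow> nat set set" where
  "ksets n k = {J. J \<subseteq> {..<n} \<and> card J = k}"

lemma finite_ksets [simp]: "finite (ksets n k)"
  unfolding ksets_def by (rule finite_subset[of _ "Pow {..<n}"]) auto

lemma ksets_finite: "J \<in> ksets n k \<Longrightarrow> finite J"
  unfolding ksets_def using finite_subset by auto

lemma ksets_nonempty: "1 \<le> k \<Longrightarrow> J \<in> ksets n k \<Longrightarrow> J \<noteq> {}"
  by (auto simp: ksets_def)

lemma Min_ksets_less: "1 \<le> k \<Longrightarrow> J \<in> ksets n k \<Longrightarrow> Min J < n"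
  using Min_in[OF ksets_finite ksets_nonempty] by (auto simp: ksets_def)

lemma card_ksets: "card (ksets n k) = n choose k"
  unfolding ksets_def using n_subsets[of "{..<n}" k] by simp

text \<open>\<open>koszul_d n k a\<close> is \<open>\<partial>(\<Sum>\<^sub>J a\<^sub>J e\<^sub>J)\<close>, as a coefficient vector over the \<open>(k-1)\<close>-subsets.\<close>

definition koszul_d :: "nat \<Rightarrow> nat \<Rightarrow> (nat set \<Rightarrow> 'a::field mpoly) \<Rightarrow> nat set \<Rightarrow> 'a mpoly" where
  "koszul_d n k a = (\<lambda>I. \<Sum>J\<in>ksets n k. a J * koszul_coeff J I)"

lemma syz_eq_koszul_d_image: "syz n k = {koszul_d n k a | a. \<forall>J. in_R n (a J)}"
  by (auto simp: syz_def koszul_d_def ksets_def)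

lemma koszul_d_add: "koszul_d n k (a + b) = koszul_d n k a + koszul_d n k b"
  by (auto simp: koszul_d_def fun_eq_iff algebra_simps sum.distrib)

lemma koszul_d_scale: "koszul_d n k (\<lambda>J. mpConst c * a J) = (\<lambda>I. mpConst c * koszul_d n k a I)"
  by (auto simp: koszul_d_def fun_eq_iff algebra_simps sum_distrib_left)

lemma koszul_d_zero [simp]: "koszul_d n k 0 = 0"
  by (auto simp: koszul_d_def fun_eq_iff)

lemma koszul_d_diff: "koszul_d n k (a - b) = koszul_d n k a - koszul_d n k b"
  by (auto simp: koszul_d_def fun_eq_iff algebra_simps sum_subtractf)

lemma koszul_d_sum: "koszul_d n k (\<Sum>x\<in>S. f x) = (\<Sum>x\<in>S. koszul_d n k (f x))"
proof (induction S rule: infinite_finite_induct)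
  case (infinite A)
  then show ?case by (simp only: sum.infinite[OF infinite] koszul_d_zero)
next
  case empty
  then show ?case by (simp only: sum.empty koszul_d_zero)
next
  case (insert x F)
  then show ?case by (simp only: sum.insert[OF insert(1,2)] koszul_d_add)
qed

lemma homog_koszul_d: "\<forall>J. homog e (b J) \<Longrightarrow> homog (e + 1) (koszul_d n k b I)"
  unfolding koszul_d_def by (intro homog_sum homog_mult homog_koszul_coeff) auto

lemma koszul_d_hcomp: "koszul_d n k (\<lambda>J. hcomp e (b J)) I = hcomp (e + 1) (koszul_d n k b I)"
  by (simp add: koszul_d_def hcomp_sum hcomp_mult_koszul_coeff)

definition unit_vec :: "'b \<Rightarrow> 'c::zero \<Rightarrow> 'b \<Rightarrow> 'c" where
  "unit_vec i p = (\<lambda>j. if j = i then p else 0)"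

lemma unit_vec_sum: "unit_vec i (\<Sum>x\<in>S. f x) = (\<Sum>x\<in>S. unit_vec i (f x))"
  by (rule ext) (simp add: fun_sum_apply unit_vec_def)

lemma unit_vec_scale: "unit_vec i (mpConst c * p) = (\<lambda>j. mpConst c * unit_vec i p j)"
  by (rule ext) (simp add: unit_vec_def)

lemma sum_unit_vec_apply: "finite S \<Longrightarrow> (\<Sum>i\<in>S. unit_vec i (f i)) j = (if j \<in> S then f j else 0)"
  by (simp add: fun_sum_apply unit_vec_def sum.delta')

lemma koszul_d_unit_vec:
  assumes "J \<in> ksets n k"
  shows "koszul_d n k (unit_vec J q) = (\<lambda>I. q * koszul_coeff J I)"
proof
  fix I
  have "koszul_d n k (unit_vec J q) I =
      (\<Sum>J'\<in>ksets n k. if J' = J then q * koszul_coeff J' I else 0)"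
    unfolding koszul_d_def by (intro sum.cong) (auto simp: unit_vec_def)
  then show "koszul_d n k (unit_vec J q) I = q * koszul_coeff J I"
    using assms by (simp add: sum.delta)
qed

lemma koszul_d_eq_sum_unit_vec: "koszul_d n k a = (\<Sum>J\<in>ksets n k. koszul_d n k (unit_vec J (a J)))"
proof -
  have "koszul_d n k a = koszul_d n k (\<Sum>J\<in>ksets n k. unit_vec J (a J))"
    by (auto simp: koszul_d_def sum_unit_vec_apply intro!: sum.cong)
  then show ?thesis by (simp add: koszul_d_sum)
qed

lemma koszul_d_remove_sum_eq_0:
  assumes L: "finite L" and ks: "\<And>l. l \<in> L \<Longrightarrow> L - {l} \<in> ksets n k"
  shows "(\<Sum>l\<in>L. koszul_d n k (unit_vec (L - {l})
            (Poly_Mapping.single (v + mon_var l) (c * koszul_sign L l) :: 'a::field mpoly))) = 0"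
proof
  fix I
  have "(\<Sum>l\<in>L. koszul_d n k (unit_vec (L - {l})
            (Poly_Mapping.single (v + mon_var l) (c * koszul_sign L l) :: 'a mpoly))) I =
        (\<Sum>l\<in>L. Poly_Mapping.single (v + mon_var l) (c * koszul_sign L l) * koszul_coeff (L - {l}) I)"
    by (simp add: fun_sum_apply koszul_d_unit_vec ks)
  also have "\<dots> = 0"
    by (rule koszul_coeff_square_cancel[OF L])
  finally show "(\<Sum>l\<in>L. koszul_d n k (unit_vec (L - {l})
            (Poly_Mapping.single (v + mon_var l) (c * koszul_sign L l) :: 'a mpoly))) I = 0 I"
    by simp
qed

section \<open>Standard form of syzygies\<close>

text \<open>Standard coefficient vectors realise the Stanley decomposition
  \<open>M(n,k) = \<Oplus>\<^sub>J K[X\<^bsub>min J\<^esub>, \<dots>, X\<^sub>n] \<partial>e\<^sub>J\<close>.\<close>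

definition standard :: "nat \<Rightarrow> nat \<Rightarrow> (nat set \<Rightarrow> 'a::field mpoly) set" where
  "standard n k = {b. (\<forall>J\<in>ksets n k. vars_in {Min J..<n} (b J)) \<and> (\<forall>J. J \<notin> ksets n k \<longrightarrow> b J = 0)}"

lemma subspace_standard: "fun_space.subspace (standard n k)"
  unfolding fun_space.subspace_def standard_def
  by (auto intro: vars_in_add vars_in_mult vars_in_mpConst)

lemma unit_vec_in_standard: "J \<in> ksets n k \<Longrightarrow> vars_in {Min J..<n} q \<Longrightarrow> unit_vec J q \<in> standard n k"
  by (auto simp: standard_def unit_vec_def)

lemma in_R_standard: "b \<in> standard n k \<Longrightarrow> in_R n (b J)"
  unfolding standard_def in_R_iff_vars_in by (cases "J \<in> ksets n k") (auto intro: vars_in_mono)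

lemma lookup_mult_koszul_coeff_eq_0:
  assumes J: "finite J" "J \<noteq> {}" and J': "finite J'" "J' \<noteq> J" "Min J' \<le> Min J"
    and u: "Poly_Mapping.keys u \<subseteq> {Min J..}"
  shows "Poly_Mapping.lookup (p * koszul_coeff J' (J - {Min J})) (u + mon_var (Min J)) = 0"
proof (cases "\<exists>j\<in>J'. J - {Min J} = J' - {j}")
  case False
  then show ?thesis by (simp add: koszul_coeff_eq_0)
next
  case True
  then obtain j where j: "j \<in> J'" and I: "J - {Min J} = J' - {j}" by blast
  have MinJ: "Min J \<in> J" using J by simp
  then have "J = insert (Min J) (J' - {j})" and "J' = insert j (J' - {j})"
    using I j by auto
  then have "j \<noteq> Min J" using J'(2) by auto
  have "j < Min J"
  proof (rule ccontr)
    assume "\<not> j < Min J"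
    then have "Min J < j" using \<open>j \<noteq> Min J\<close> by simp
    then have "Min J' \<in> J' - {j}"
      using J' j by (auto intro: Min_in)
    then have "Min J' \<in> J" "Min J' \<noteq> Min J" using I by auto
    then show False using Min_le[OF J(1), of "Min J'"] J'(3) by simp
  qed
  have "u + mon_var (Min J) \<noteq> x + mon_var j" for x
  proof
    assume "u + mon_var (Min J) = x + mon_var j"
    then have "Poly_Mapping.lookup (u + mon_var (Min J)) j = Poly_Mapping.lookup (x + mon_var j) j"
      by simp
    moreover have "Poly_Mapping.lookup (u + mon_var (Min J)) j = 0"
      using u \<open>j < Min J\<close> by (auto simp: lookup_add lookup_single in_keys_iff when_def)
    ultimately show False by (simp add: lookup_add)
  qed
  then show ?thesis
    unfolding I koszul_coeff_Diff_single[OF j] by (rule lookup_mult_single_eq_0)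
qed

text \<open>Standard vectors are determined by their image: for a nonzero standard \<open>b\<close>, choose \<open>J\<close>
  with \<open>b\<^sub>J \<noteq> 0\<close> and \<open>min J\<close> maximal and a monomial \<open>u\<close> of \<open>b\<^sub>J\<close>; then \<open>u X\<^bsub>min J\<^esub>\<close> occurs in
  the \<open>(J - {min J})\<close>-coordinate of \<open>\<partial>b\<close> and nowhere else.\<close>

lemma standard_koszul_d_eq_0:
  assumes k: "1 \<le> k" and b: "b \<in> standard n k" and "koszul_d n k b = 0"
  shows "b = 0"
proof (rule ccontr)
  assume "b \<noteq> 0"
  define S where "S = {J\<in>ksets n k. b J \<noteq> 0}"
  have "S \<noteq> {}" using \<open>b \<noteq> 0\<close> b by (auto simp: S_def standard_def fun_eq_iff)
  moreover have "finite S" by (simp add: S_def)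
  ultimately have "Max (Min ` S) \<in> Min ` S"
    by (intro Max_in) auto
  then obtain J where "J \<in> S" and "Min J = Max (Min ` S)"
    by auto
  then have max: "\<And>J'. J' \<in> S \<Longrightarrow> Min J' \<le> Min J"
    using \<open>finite S\<close> by simp
  from \<open>J \<in> S\<close> have J: "J \<in> ksets n k" "b J \<noteq> 0" by (auto simp: S_def)
  have fin: "finite J" "J \<noteq> {}" using J k ksets_finite ksets_nonempty by auto
  obtain u where u: "u \<in> Poly_Mapping.keys (b J)"
    using J(2) by (metis ex_in_conv keys_eq_empty)
  moreover have "vars_in {Min J..<n} (b J)"
    using J(1) b by (simp add: standard_def)
  ultimately have keys_u: "Poly_Mapping.keys u \<subseteq> {Min J..}"
    by (fastforce simp: vars_in_def)
  define I where "I = J - {Min J}"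
  define w where "w = u + mon_var (Min J)"
  have others: "Poly_Mapping.lookup (b J' * koszul_coeff J' I) w = 0"
    if "J' \<in> ksets n k" "J' \<noteq> J" for J'
  proof (cases "b J' = 0")
    case False
    then have "Min J' \<le> Min J" using that max by (simp add: S_def)
    then show ?thesis unfolding I_def w_def
      using lookup_mult_koszul_coeff_eq_0[OF fin ksets_finite[OF that(1)] that(2) _ keys_u] by simp
  qed simp
  have "0 = Poly_Mapping.lookup (koszul_d n k b I) w"
    using assms(3) by simp
  also have "\<dots> = (\<Sum>J'\<in>ksets n k. Poly_Mapping.lookup (b J' * koszul_coeff J' I) w)"
    by (simp add: koszul_d_def lookup_sum)
  also have "\<dots> = Poly_Mapping.lookup (b J * koszul_coeff J I) w"
    using others J(1) by (subst sum.remove[OF finite_ksets J(1)]) (auto intro!: sum.neutral)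
  also have "\<dots> = Poly_Mapping.lookup (b J) u * koszul_sign J (Min J)"
    unfolding I_def w_def koszul_coeff_Diff_single[OF Min_in[OF fin]] lookup_mult_single_add ..
  also have "\<dots> \<noteq> 0" using u by (simp add: in_keys_iff)
  finally show False by simp
qed

lemma inj_on_koszul_d_standard:
  assumes "1 \<le> k"
  shows "inj_on (koszul_d n k) (standard n k)"
proof (rule inj_onI)
  fix a b assume "a \<in> standard n k" "b \<in> standard n k" "koszul_d n k a = koszul_d n k b"
  then have "a - b \<in> standard n k" "koszul_d n k (a - b) = 0"
    using fun_space.subspace_diff[OF subspace_standard] by (auto simp: koszul_d_diff)
  then have "a - b = 0"
    using standard_koszul_d_eq_0[OF assms] by blast
  then show "a = b" by simp
qed

lemma subspace_koszul_d_image: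
  "fun_space.subspace (koszul_d n k ` standard n k :: (nat set \<Rightarrow> 'a::field mpoly) set)"
proof (rule fun_space.subspaceI)
  have "koszul_d n k 0 \<in> koszul_d n k ` (standard n k :: (nat set \<Rightarrow> 'a mpoly) set)"
    using fun_space.subspace_0[OF subspace_standard] by (rule imageI)
  then show "0 \<in> koszul_d n k ` (standard n k :: (nat set \<Rightarrow> 'a mpoly) set)"
    by simp
next
  fix x y :: "nat set \<Rightarrow> 'a mpoly"
  assume "x \<in> koszul_d n k ` standard n k" "y \<in> koszul_d n k ` standard n k"
  then obtain a b where "a \<in> standard n k" "b \<in> standard n k" "x = koszul_d n k a" "y = koszul_d n k b"
    by blast
  then have "a + b \<in> standard n k" "x + y = koszul_d n k (a + b)"
    using fun_space.subspace_add[OF subspace_standard] by (auto simp: koszul_d_add)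
  then show "x + y \<in> koszul_d n k ` standard n k" by blast
next
  fix c and x :: "nat set \<Rightarrow> 'a mpoly"
  assume "x \<in> koszul_d n k ` standard n k"
  then obtain a where "a \<in> standard n k" "x = koszul_d n k a"
    by blast
  then have "(\<lambda>J. mpConst c * a J) \<in> standard n k" "(\<lambda>i. mpConst c * x i) = koszul_d n k (\<lambda>J. mpConst c * a J)"
    using fun_space.subspace_scale[OF subspace_standard] by (auto simp: koszul_d_scale)
  then show "(\<lambda>i. mpConst c * x i) \<in> koszul_d n k ` standard n k" by blast
qed

text \<open>Straightening: if \<open>i = min u < min J\<close>, the relation \<open>\<partial>\<^sup>2 e\<^bsub>J \<union> {i}\<^esub> = 0\<close>, multiplied by
  \<open>u / X\<^sub>i\<close>, rewrites \<open>\<partial>(u e\<^sub>J)\<close> in terms of the \<open>\<partial>(u X\<^sub>l / X\<^sub>i e\<^bsub>J \<union> {i} - {l}\<^esub>)\<close>, \<open>l \<in> J\<close>,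
  which are standard because \<open>min (J \<union> {i} - {l}) = i\<close>.\<close>

lemma koszul_d_unit_vec_monomial_in_image:
  assumes k: "1 \<le> k" and J: "J \<in> ksets n k" and u: "Poly_Mapping.keys u \<subseteq> {..<n}"
  shows "koszul_d n k (unit_vec J (Poly_Mapping.single u c :: 'a::field mpoly))
           \<in> koszul_d n k ` standard n k"
proof (cases "Poly_Mapping.keys u \<subseteq> {Min J..<n}")
  case True
  then show ?thesis
    using unit_vec_in_standard[OF J vars_in_single] by blast
next
  case False
  have fJ: "finite J" "J \<noteq> {}" using J k ksets_finite ksets_nonempty by auto
  have Jn: "J \<subseteq> {..<n}" "card J = k" using J by (auto simp: ksets_def)
  define i where "i = Min (Poly_Mapping.keys u)"
  have "Poly_Mapping.keys u \<noteq> {}" using False by auto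
  then have iu: "i \<in> Poly_Mapping.keys u" and ile: "\<And>y. y \<in> Poly_Mapping.keys u \<Longrightarrow> i \<le> y"
    by (auto simp: i_def)
  obtain x where "x \<in> Poly_Mapping.keys u" "x \<notin> {Min J..<n}" using False by blast
  then have "i < Min J" using u ile[of x] by auto
  then have iJ: "\<And>y. y \<in> J \<Longrightarrow> i < y" using fJ by (meson Min_le less_le_trans)
  then have "i \<notin> J" by blast
  define L where "L = insert i J"
  define u' where "u' = u - mon_var i"
  have uu': "u = u' + mon_var i"
    by (rule poly_mapping_eqI)
      (use iu in \<open>auto simp: u'_def lookup_add lookup_minus lookup_single when_def in_keys_iff\<close>)
  have keys_u': "Poly_Mapping.keys u' \<subseteq> Poly_Mapping.keys u"
    by (auto simp: u'_def in_keys_iff lookup_minus)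
  define t where "t l = unit_vec (L - {l}) (Poly_Mapping.single (u' + mon_var l) (c * koszul_sign L l))" for l
  have Li: "L - {i} = J" using \<open>i \<notin> J\<close> by (auto simp: L_def)
  have Ll: "L - {l} \<in> ksets n k" if "l \<in> J" for l
    using that \<open>i \<notin> J\<close> fJ Jn iu u by (auto simp: L_def ksets_def card_insert_if)
  have none_below: "{y\<in>L. y < i} = {}"
    using iJ by (auto simp: L_def dest: less_asym)
  have "koszul_sign L i = (1::'a)"
    unfolding koszul_sign_def none_below by simp
  then have ti: "t i = unit_vec J (Poly_Mapping.single u c)"
    by (simp add: t_def Li uu')
  have finite_L: "finite L"
    using fJ(1) by (simp add: L_def)
  have L_ksets: "L - {l} \<in> ksets n k" if "l \<in> L" for l
    using that Ll Li J by (cases "l = i") (auto simp: L_def)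
  have "koszul_d n k (t i) + (\<Sum>l\<in>J. koszul_d n k (t l)) = (\<Sum>l\<in>L. koszul_d n k (t l))"
    unfolding L_def by (simp only: sum.insert[OF fJ(1) \<open>i \<notin> J\<close>])
  also have "\<dots> = 0"
    unfolding t_def by (rule koszul_d_remove_sum_eq_0[OF finite_L L_ksets])
  finally have "koszul_d n k (t i) = - (\<Sum>l\<in>J. koszul_d n k (t l))"
    by (simp add: eq_neg_iff_add_eq_0)
  then have eq: "koszul_d n k (unit_vec J (Poly_Mapping.single u c)) = - (\<Sum>l\<in>J. koszul_d n k (t l))"
    by (simp add: ti)
  have "koszul_d n k (t l) \<in> koszul_d n k ` standard n k" if l: "l \<in> J" for l
  proof -
    have "Min (L - {l}) = i"
      using fJ l \<open>i \<notin> J\<close> iJ by (intro Min_eqI) (auto simp: L_def less_imp_le)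
    moreover have "Poly_Mapping.keys (u' + mon_var l) \<subseteq> {i..<n}"
    proof
      fix y assume "y \<in> Poly_Mapping.keys (u' + mon_var l)"
      then have "y \<in> Poly_Mapping.keys u \<or> y = l"
        using keys_add[of u' "mon_var l"] keys_u' by auto
      then show "y \<in> {i..<n}"
        using ile u iJ[OF l] l Jn by auto
    qed
    ultimately have "t l \<in> standard n k"
      unfolding t_def by (intro unit_vec_in_standard[OF Ll[OF l]] vars_in_single) simp
    then show ?thesis by (rule imageI)
  qed
  then have "(\<Sum>l\<in>J. koszul_d n k (t l)) \<in> koszul_d n k ` standard n k"
    by (intro fun_space.subspace_sum[OF subspace_koszul_d_image])
  then show ?thesis
    unfolding eq by (rule fun_space.subspace_neg[OF subspace_koszul_d_image])
qed

lemma koszul_d_in_image: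
  assumes k: "1 \<le> k" and a: "\<forall>J. in_R n (a J)"
  shows "koszul_d n k (a :: nat set \<Rightarrow> 'a::field mpoly) \<in> koszul_d n k ` standard n k"
proof -
  have "koszul_d n k (unit_vec J (Poly_Mapping.single m (Poly_Mapping.lookup (a J) m)))
          \<in> koszul_d n k ` standard n k"
    if "J \<in> ksets n k" "m \<in> Poly_Mapping.keys (a J)" for J m
    using that a by (intro koszul_d_unit_vec_monomial_in_image[OF k]) (auto simp: in_R_def)
  then have "(\<Sum>J\<in>ksets n k. \<Sum>m\<in>Poly_Mapping.keys (a J).
      koszul_d n k (unit_vec J (Poly_Mapping.single m (Poly_Mapping.lookup (a J) m))))
          \<in> koszul_d n k ` standard n k"
    using subspace_koszul_d_image by (intro fun_space.subspace_sum) auto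
  moreover have "koszul_d n k (unit_vec J (a J)) = (\<Sum>m\<in>Poly_Mapping.keys (a J).
      koszul_d n k (unit_vec J (Poly_Mapping.single m (Poly_Mapping.lookup (a J) m))))" for J
  proof -
    have "koszul_d n k (unit_vec J (a J)) = koszul_d n k (unit_vec J
        (\<Sum>m\<in>Poly_Mapping.keys (a J). Poly_Mapping.single m (Poly_Mapping.lookup (a J) m)))"
      by (simp flip: poly_mapping_sum_single)
    then show ?thesis by (simp add: unit_vec_sum koszul_d_sum)
  qed
  ultimately show ?thesis
    by (simp add: koszul_d_eq_sum_unit_vec[of n k a])
qed

definition standard_homog :: "nat \<Rightarrow> nat \<Rightarrow> int \<Rightarrow> (nat set \<Rightarrow> 'a::field mpoly) set" where
  "standard_homog n k e = {b\<in>standard n k. \<forall>J. homog e (b J)}"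

lemma subspace_standard_homog: "fun_space.subspace (standard_homog n k e)"
  using subspace_standard[of n k] unfolding fun_space.subspace_def standard_homog_def
  by (auto intro: homog_add homog_mpConst_mult)

lemma koszul_d_standard_homog_in_syz_piece:
  assumes "b \<in> standard_homog n k (d - int k)"
  shows "koszul_d n k b \<in> syz_piece n k d"
proof -
  have "\<forall>J. in_R n (b J)"
    using assms by (auto simp: standard_homog_def intro: in_R_standard)
  then have "koszul_d n k b \<in> syz n k"
    unfolding syz_eq_koszul_d_image by (intro CollectI exI[of _ b] conjI refl)
  moreover have "homog (d - int k + 1) (koszul_d n k b I)" for I
    using assms by (auto simp: standard_homog_def intro: homog_koszul_d)
  ultimately show ?thesis
    by (simp add: syz_piece_def algebra_simps)
qed

lemma syz_piece_subset_koszul_d_image: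
  assumes k: "1 \<le> k" and v: "v \<in> syz_piece n k d"
  shows "v \<in> koszul_d n k ` standard_homog n k (d - int k)"
proof -
  obtain a where a: "\<forall>J. in_R n (a J)" and va: "v = koszul_d n k a"
    using v unfolding syz_piece_def syz_eq_koszul_d_image by blast
  from koszul_d_in_image[OF k a]
  obtain b0 where "koszul_d n k a = koszul_d n k b0" and b0: "b0 \<in> standard n k"
    by (rule imageE)
  then have eq: "koszul_d n k b0 = v"
    by (simp add: va)
  define b where "b = (\<lambda>J. hcomp (d - int k) (b0 J))"
  have "b \<in> standard n k"
    using b0 unfolding standard_def b_def by (auto intro: vars_in_hcomp)
  moreover have "\<forall>J. homog (d - int k) (b J)"
    by (simp add: b_def homog_hcomp)
  ultimately have b: "b \<in> standard_homog n k (d - int k)"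
    by (simp add: standard_homog_def)
  have "koszul_d n k b = v"
  proof
    fix I
    have "homog (d - (int k - 1)) (v I)"
      using v by (simp add: syz_piece_def)
    then have "homog (d - int k + 1) (v I)"
      by (simp add: algebra_simps)
    then show "koszul_d n k b I = v I"
      unfolding b_def koszul_d_hcomp eq by (rule hcomp_homog)
  qed
  then show ?thesis
    using b by (metis image_eqI)
qed

lemma syz_piece_eq_image:
  assumes "1 \<le> k"
  shows "syz_piece n k d = koszul_d n k ` standard_homog n k (d - int k)"
proof (intro equalityI subsetI)
  show "v \<in> koszul_d n k ` standard_homog n k (d - int k)" if "v \<in> syz_piece n k d" for v
    using assms that by (rule syz_piece_subset_koszul_d_image)
  show "v \<in> syz_piece n k d" if "v \<in> koszul_d n k ` standard_homog n k (d - int k)" for v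
    using that by (auto intro: koszul_d_standard_homog_in_syz_piece)
qed

lemma bij_betw_koszul_d_syz_piece:
  assumes "1 \<le> k"
  shows "bij_betw (koszul_d n k) (standard_homog n k (d - int k)) (syz_piece n k d)"
proof -
  have "standard_homog n k (d - int k) \<subseteq> standard n k"
    by (auto simp: standard_homog_def)
  then have "inj_on (koszul_d n k) (standard_homog n k (d - int k))"
    by (rule inj_on_subset[OF inj_on_koszul_d_standard[OF assms]])
  then show ?thesis
    by (simp add: bij_betw_def syz_piece_eq_image[OF assms])
qed

section \<open>Maps that are linear on a subspace\<close>

text \<open>The maps of a Hilbert decomposition are only required to be additive and \<open>K\<close>-homogeneous on
  a single graded piece, so they are not \<open>linear\<close> maps in the sense of the library.\<close>

definition linear_on :: "('b \<Rightarrow> 'a::field mpoly) set \<Rightarrow> (('b \<Rightarrow> 'a mpoly) \<Rightarrow> 'c \<Rightarrow> 'a mpoly) \<Rightarrow> bool" where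
  "linear_on V f \<longleftrightarrow> (\<forall>x\<in>V. \<forall>y\<in>V. f (x + y) = f x + f y) \<and>
                     (\<forall>c. \<forall>x\<in>V. f (\<lambda>i. mpConst c * x i) = (\<lambda>i. mpConst c * f x i))"

lemma hilbert_decomp_iff:
  "hilbert_decomp n k D \<longleftrightarrow> (\<forall>i<length D. graded_retract n (fst (D ! i))) \<and>
     (\<forall>d. \<exists>f. bij_betw f (syz_piece n k d) (dsum_piece D d) \<and> linear_on (syz_piece n k d) f)"
  unfolding hilbert_decomp_def linear_on_def plus_fun_def ..

lemma linear_onD:
  assumes "linear_on V f"
  shows linear_on_add: "x \<in> V \<Longrightarrow> y \<in> V \<Longrightarrow> f (x + y) = f x + f y"
    and linear_on_scale: "x \<in> V \<Longrightarrow> f (\<lambda>i. mpConst c * x i) = (\<lambda>i. mpConst c * f x i)"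
  using assms by (simp_all add: linear_on_def)

lemma linear_on_koszul_d: "linear_on V (koszul_d n k)"
  by (simp add: linear_on_def koszul_d_add koszul_d_scale)

lemma linear_on_comp:
  assumes g: "linear_on V g" and gV: "g ` V \<subseteq> W" and f: "linear_on W f"
  shows "linear_on V (f \<circ> g)"
  unfolding linear_on_def comp_def
proof (intro conjI ballI allI)
  fix x y assume "x \<in> V" "y \<in> V"
  then show "f (g (x + y)) = f (g x) + f (g y)"
    using gV by (simp add: linear_on_add[OF g] linear_on_add[OF f] image_subset_iff)
next
  fix c x assume "x \<in> V"
  then show "f (g (\<lambda>i. mpConst c * x i)) = (\<lambda>i. mpConst c * f (g x) i)"
    using gV by (simp add: linear_on_scale[OF g] linear_on_scale[OF f] image_subset_iff)
qed

lemma linear_on_zero: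
  assumes V: "fun_space.subspace V" and f: "linear_on V f"
  shows "f 0 = 0"
proof -
  have "f 0 = f (0 + 0)" by simp
  also have "\<dots> = f 0 + f 0"
    using linear_on_add[OF f fun_space.subspace_0[OF V] fun_space.subspace_0[OF V]] .
  finally show ?thesis by simp
qed

lemma linear_on_sum:
  assumes V: "fun_space.subspace V" and f: "linear_on V f" and T: "finite T" "T \<subseteq> V"
  shows "f (\<Sum>x\<in>T. (\<lambda>i. mpConst (u x) * x i)) = (\<Sum>x\<in>T. (\<lambda>i. mpConst (u x) * f x i))"
  using T
proof (induction T rule: finite_induct)
  case empty
  then show ?case using linear_on_zero[OF V f] by (simp only: sum.empty)
next
  case (insert x T)
  let ?s = "\<Sum>x\<in>T. (\<lambda>i. mpConst (u x) * x i)"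
  have x: "(\<lambda>i. mpConst (u x) * x i) \<in> V"
    using insert.prems V by (simp add: fun_space.subspace_scale)
  have s: "?s \<in> V"
    using insert.prems V by (simp add: fun_space.subspace_scale fun_space.subspace_sum subset_iff)
  have "f (\<Sum>x\<in>insert x T. (\<lambda>i. mpConst (u x) * x i)) = f ((\<lambda>i. mpConst (u x) * x i) + ?s)"
    using insert.hyps by simp
  also have "\<dots> = (\<lambda>i. mpConst (u x) * f x i) + (\<Sum>x\<in>T. (\<lambda>i. mpConst (u x) * f x i))"
    using insert x s by (simp add: linear_on_add[OF f] linear_on_scale[OF f])
  also have "\<dots> = (\<Sum>x\<in>insert x T. (\<lambda>i. mpConst (u x) * f x i))"
    using insert.hyps by simp
  finally show ?case .
qed

lemma linear_on_span_image:
  assumes V: "fun_space.subspace V" and f: "linear_on V f" and S: "S \<subseteq> V"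
  shows "f ` fun_space.span S \<subseteq> fun_space.span (f ` S)"
proof
  fix y assume "y \<in> f ` fun_space.span S"
  then obtain t r where t: "finite t" "t \<subseteq> S" and y: "y = f (\<Sum>x\<in>t. (\<lambda>i. mpConst (r x) * x i))"
    unfolding fun_space.span_explicit by auto
  have "y = (\<Sum>x\<in>t. (\<lambda>i. mpConst (r x) * f x i))"
    unfolding y using t S by (intro linear_on_sum[OF V f]) auto
  also have "\<dots> \<in> fun_space.span (f ` S)"
    using t by (intro fun_space.span_sum fun_space.span_scale fun_space.span_base) auto
  finally show "y \<in> fun_space.span (f ` S)" .
qed

lemma independent_image_linear_on:
  assumes V: "fun_space.subspace V" and f: "linear_on V f" and inj: "inj_on f V"
    and A: "A \<subseteq> V" "fun_space.independent A"
  shows "fun_space.independent (f ` A)"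
  unfolding fun_space.independent_explicit_finite_subsets
proof (intro allI impI ballI)
  fix S u w
  assume S: "S \<subseteq> f ` A" "finite S" and sum0: "(\<Sum>v\<in>S. (\<lambda>i. mpConst (u v) * v i)) = 0"
    and w: "w \<in> S"
  define S' where "S' = {x\<in>A. f x \<in> S}"
  have S'A: "S' \<subseteq> A" by (simp add: S'_def)
  then have "S' \<subseteq> V" using A(1) by blast
  then have inj': "inj_on f S'" by (rule inj_on_subset[OF inj])
  have SS': "S = f ` S'"
    using S(1) by (auto simp: S'_def)
  then have fin': "finite S'"
    using S(2) by (simp add: finite_image_iff[OF inj'])
  let ?x = "\<Sum>x\<in>S'. (\<lambda>i. mpConst (u (f x)) * x i)"
  have "f ?x = (\<Sum>x\<in>S'. (\<lambda>i. mpConst (u (f x)) * f x i))"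
    using fin' \<open>S' \<subseteq> V\<close> by (rule linear_on_sum[OF V f])
  also have "\<dots> = 0"
    using sum0 unfolding SS' by (simp add: sum.reindex[OF inj'])
  finally have "f ?x = f 0"
    using linear_on_zero[OF V f] by simp
  moreover have "?x \<in> V"
    using \<open>S' \<subseteq> V\<close> by (intro fun_space.subspace_sum[OF V] fun_space.subspace_scale[OF V]) auto
  ultimately have "?x = 0"
    using inj fun_space.subspace_0[OF V] by (simp add: inj_on_eq_iff)
  moreover have indep: "\<And>T c. T \<subseteq> A \<Longrightarrow> finite T \<Longrightarrow> (\<Sum>v\<in>T. (\<lambda>i. mpConst (c v) * v i)) = 0 \<Longrightarrow>
      \<forall>v\<in>T. c v = 0"
    using A(2) unfolding fun_space.independent_explicit_finite_subsets by blast
  ultimately have "\<forall>x\<in>S'. u (f x) = 0"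
    using indep[OF S'A fin', of "\<lambda>x. u (f x)"] by simp
  then show "u w = 0" using w SS' by blast
qed

lemma linear_on_the_inv_into:
  assumes V: "fun_space.subspace V" and bij: "bij_betw f V W" and f: "linear_on V f"
  shows "linear_on W (the_inv_into V f)"
proof -
  have inj: "inj_on f V" and W: "W = f ` V"
    using bij by (auto simp: bij_betw_def)
  have inv: "the_inv_into V f (f a) = a" if "a \<in> V" for a
    using inj that by (rule the_inv_into_f_f)
  show ?thesis
    unfolding linear_on_def W
  proof (intro conjI ballI allI)
    fix x y assume "x \<in> f ` V" "y \<in> f ` V"
    then obtain a b where ab: "a \<in> V" "b \<in> V" "x = f a" "y = f b" by blast
    then have "x + y = f (a + b)"
      using f by (simp add: linear_on_def)
    then show "the_inv_into V f (x + y) = the_inv_into V f x + the_inv_into V f y"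
      using ab inv fun_space.subspace_add[OF V] by simp
  next
    fix c x assume "x \<in> f ` V"
    then obtain a where a: "a \<in> V" "x = f a" by blast
    then have "(\<lambda>i. mpConst c * x i) = f (\<lambda>i. mpConst c * a i)"
      using f by (simp add: linear_on_def)
    then show "the_inv_into V f (\<lambda>i. mpConst c * x i) = (\<lambda>i. mpConst c * the_inv_into V f x i)"
      using a inv fun_space.subspace_scale[OF V] by simp
  qed
qed

lemma inj_on_unit_vecs:
  assumes "\<And>i. i \<in> Q \<Longrightarrow> 0 \<notin> B i"
  shows "inj_on (\<lambda>(i, b). unit_vec i b) (Sigma Q B)"
proof (rule inj_onI, clarify)
  fix i b j c
  assume "i \<in> Q" "b \<in> B i" "unit_vec i b = unit_vec j c"
  then have "b = (if i = j then c else 0)"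
    by (metis unit_vec_def)
  then show "i = j \<and> b = c"
    using assms \<open>i \<in> Q\<close> \<open>b \<in> B i\<close> by (auto split: if_splits)
qed

lemma independent_unit_vecs:
  assumes B: "\<And>i. i \<in> Q \<Longrightarrow> mpoly_space.independent (B i)"
  shows "fun_space.independent (\<Union>i\<in>Q. unit_vec i ` B i)"
  unfolding fun_space.independent_explicit_finite_subsets
proof (intro allI impI ballI)
  fix T u w
  assume T: "T \<subseteq> (\<Union>i\<in>Q. unit_vec i ` B i)" "finite T"
    and sum0: "(\<Sum>v\<in>T. (\<lambda>j. mpConst (u v) * v j)) = 0" and "w \<in> T"
  then obtain i b where i: "i \<in> Q" "b \<in> B i" and w: "w = unit_vec i b" by blast
  define Bi where "Bi = {b' \<in> B i. unit_vec i b' \<in> T}"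
  have inj: "inj_on (unit_vec i) Bi"
    by (rule inj_onI) (metis unit_vec_def)
  have Bi_T: "unit_vec i ` Bi \<subseteq> T"
    by (auto simp: Bi_def)
  then have "finite Bi"
    using T(2) finite_subset finite_image_iff[OF inj] by blast
  have "v i = 0" if v: "v \<in> T - unit_vec i ` Bi" for v
  proof -
    obtain j c where "j \<in> Q" "c \<in> B j" "v = unit_vec j c"
      using v T(1) by blast
    then show ?thesis
      using v by (auto simp: Bi_def unit_vec_def)
  qed
  then have "(\<Sum>v\<in>T. mpConst (u v) * v i) = (\<Sum>v\<in>unit_vec i ` Bi. mpConst (u v) * v i)"
    using T(2) Bi_T by (intro sum.mono_neutral_right) auto
  also have "\<dots> = (\<Sum>b'\<in>Bi. mpConst (u (unit_vec i b')) * b')"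
    by (simp add: sum.reindex[OF inj], simp add: unit_vec_def)
  finally have zero: "(\<Sum>b'\<in>Bi. mpConst (u (unit_vec i b')) * b') = 0"
    using fun_cong[OF sum0, of i] by (simp add: fun_sum_apply)
  have indep: "\<And>S c. S \<subseteq> B i \<Longrightarrow> finite S \<Longrightarrow> (\<Sum>v\<in>S. mpConst (c v) * v) = 0 \<Longrightarrow>
      \<forall>v\<in>S. c v = 0"
    using B[OF i(1)] unfolding mpoly_space.independent_explicit_finite_subsets by blast
  have "\<forall>b'\<in>Bi. u (unit_vec i b') = 0"
    using indep[of Bi "\<lambda>b'. u (unit_vec i b')"] \<open>finite Bi\<close> zero by (simp add: Bi_def)
  moreover have "b \<in> Bi"
    using i \<open>w \<in> T\<close> w by (simp add: Bi_def)
  ultimately show "u w = 0"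
    using w by blast
qed

lemma card_Union_unit_vecs:
  assumes fin: "finite (\<Union>i\<in>Q. unit_vec i ` B i)" and "finite Q"
    and B: "\<And>i. i \<in> Q \<Longrightarrow> mpoly_space.independent (B i)"
  shows "card (\<Union>i\<in>Q. unit_vec i ` B i) = (\<Sum>i\<in>Q. card (B i))"
proof -
  have inj: "inj_on (\<lambda>(i, b). unit_vec i b) (Sigma Q B)"
    by (intro inj_on_unit_vecs) (use B mpoly_space.dependent_zero in blast)
  have "(\<Union>i\<in>Q. unit_vec i ` B i) = (\<lambda>(i, b). unit_vec i b) ` Sigma Q B"
    by auto
  then have fin_Sigma: "finite (Sigma Q B)" and card: "card (\<Union>i\<in>Q. unit_vec i ` B i) = card (Sigma Q B)"
    using fin finite_image_iff[OF inj] card_image[OF inj] by simp_all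
  have "finite (B i)" if "i \<in> Q" for i
  proof (rule finite_subset)
    show "B i \<subseteq> snd ` Sigma Q B" using that by force
  qed (use fin_Sigma in simp)
  then show ?thesis
    using card \<open>finite Q\<close> by (simp add: card_SigmaI)
qed

section \<open>A Hilbert decomposition of \<open>M(n,k)\<close>\<close>

definition list_coords :: "'b list \<Rightarrow> ('b \<Rightarrow> 'c::zero) \<Rightarrow> nat \<Rightarrow> 'c" where
  "list_coords xs b = (\<lambda>i. if i < length xs then b (xs ! i) else 0)"

lemma linear_on_list_coords: "linear_on V (list_coords xs)"
  by (auto simp: linear_on_def list_coords_def)

lemma bij_betw_list_coords:
  assumes "distinct xs"
  shows "bij_betw (list_coords xs)
           {b. (\<forall>x\<in>set xs. b x \<in> P x) \<and> (\<forall>x. x \<notin> set xs \<longrightarrow> b x = 0)}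
           {g. (\<forall>i<length xs. g i \<in> P (xs ! i)) \<and> (\<forall>i\<ge>length xs. g i = 0)}"
    (is "bij_betw _ ?A ?B")
proof -
  define idx where "idx = the_inv_into {..<length xs} ((!) xs)"
  have inj: "inj_on ((!) xs) {..<length xs}"
    using assms by (simp add: inj_on_nth)
  have idx_nth: "idx (xs ! i) = i" if "i < length xs" for i
    using the_inv_into_f_f[OF inj] that by (simp add: idx_def)
  have idx: "idx x < length xs \<and> xs ! idx x = x" if "x \<in> set xs" for x
    using that idx_nth by (auto simp: in_set_conv_nth)
  show ?thesis
  proof (rule bij_betw_byWitness[where f' = "\<lambda>g x. if x \<in> set xs then g (idx x) else 0"])
    show "\<forall>b\<in>?A. (\<lambda>x. if x \<in> set xs then list_coords xs b (idx x) else 0) = b"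
      using idx by (auto simp: list_coords_def fun_eq_iff)
    show "\<forall>g\<in>?B. list_coords xs (\<lambda>x. if x \<in> set xs then g (idx x) else 0) = g"
      using idx_nth by (auto simp: list_coords_def fun_eq_iff nth_mem)
    show "list_coords xs ` ?A \<subseteq> ?B"
      by (auto simp: list_coords_def nth_mem)
    show "(\<lambda>g x. if x \<in> set xs then g (idx x) else 0) ` ?B \<subseteq> ?A"
    proof clarify
      fix g assume g: "\<forall>i<length xs. g i \<in> P (xs ! i)" "\<forall>i\<ge>length xs. g i = 0"
      have "g (idx x) \<in> P x" if "x \<in> set xs" for x
        using g(1) idx[OF that] by metis
      then show "(\<forall>x\<in>set xs. (if x \<in> set xs then g (idx x) else 0) \<in> P x) \<and>
          (\<forall>x. x \<notin> set xs \<longrightarrow> (if x \<in> set xs then g (idx x) else 0) = 0)"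
        by simp
    qed
  qed
qed

definition enum_ksets :: "nat \<Rightarrow> nat \<Rightarrow> nat set list" where
  "enum_ksets n k = (SOME xs. distinct xs \<and> set xs = ksets n k)"

lemma enum_ksets: "distinct (enum_ksets n k)" "set (enum_ksets n k) = ksets n k"
proof -
  have "\<exists>xs. distinct xs \<and> set xs = ksets n k"
    by (metis finite_distinct_list finite_ksets)
  then have "distinct (enum_ksets n k) \<and> set (enum_ksets n k) = ksets n k"
    unfolding enum_ksets_def by (rule someI_ex)
  then show "distinct (enum_ksets n k)" "set (enum_ksets n k) = ksets n k"
    by simp_all
qed

definition canonical_decomp :: "nat \<Rightarrow> nat \<Rightarrow> ('a::field mpoly set \<times> int) list" where
  "canonical_decomp n k = map (\<lambda>J. (alg_gen (mpVar ` {Min J..<n}), int k)) (enum_ksets n k)"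

lemma graded_retract_alg_gen_mpVar: "A \<subseteq> {..<n} \<Longrightarrow> graded_retract n (alg_gen (mpVar ` A))"
  unfolding graded_retract_def linear_forms_def
  by (rule exI[of _ "mpVar ` A"]) (auto simp: in_R_iff_vars_in intro: vars_in_mpVar homog_mpVar)

lemma piece_alg_gen_mpVar: "piece (alg_gen (mpVar ` A)) e = {p. vars_in A p \<and> homog e p}"
  by (auto simp: piece_def alg_gen_mpVar_iff)

lemma hilbert_decomp_canonical_decomp:
  assumes k: "1 \<le> k"
  shows "hilbert_decomp n k (canonical_decomp n k :: ('a::field mpoly set \<times> int) list)"
  unfolding hilbert_decomp_iff
proof (intro conjI allI impI)
  fix i assume "i < length (canonical_decomp n k :: ('a mpoly set \<times> int) list)"
  then show "graded_retract n (fst ((canonical_decomp n k :: ('a mpoly set \<times> int) list) ! i))"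
    by (auto simp: canonical_decomp_def intro!: graded_retract_alg_gen_mpVar)
next
  fix d :: int
  let ?xs = "enum_ksets n k"
  let ?P = "\<lambda>J. piece (alg_gen (mpVar ` {Min J..<n})) (d - int k) :: 'a mpoly set"
  let ?V = "standard_homog n k (d - int k) :: (nat set \<Rightarrow> 'a mpoly) set"
  have V: "?V = {b. (\<forall>J\<in>set ?xs. b J \<in> ?P J) \<and> (\<forall>J. J \<notin> set ?xs \<longrightarrow> b J = 0)}"
  proof (intro set_eqI iffI)
    fix b assume "b \<in> ?V"
    then show "b \<in> {b. (\<forall>J\<in>set ?xs. b J \<in> ?P J) \<and> (\<forall>J. J \<notin> set ?xs \<longrightarrow> b J = 0)}"
      by (simp add: standard_homog_def standard_def enum_ksets piece_alg_gen_mpVar)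
  next
    fix b assume b: "b \<in> {b. (\<forall>J\<in>set ?xs. b J \<in> ?P J) \<and> (\<forall>J. J \<notin> set ?xs \<longrightarrow> b J = 0)}"
    then have "homog (d - int k) (b J)" for J
      by (cases "J \<in> ksets n k") (simp_all add: enum_ksets piece_alg_gen_mpVar)
    with b show "b \<in> ?V"
      by (simp add: standard_homog_def standard_def enum_ksets piece_alg_gen_mpVar)
  qed
  have D: "dsum_piece (canonical_decomp n k) d =
      {g. (\<forall>i<length ?xs. g i \<in> ?P (?xs ! i)) \<and> (\<forall>i\<ge>length ?xs. g i = 0)}"
    by (simp add: dsum_piece_def canonical_decomp_def)
  have coords: "bij_betw (list_coords ?xs) ?V (dsum_piece (canonical_decomp n k) d)"
    unfolding V D by (rule bij_betw_list_coords[OF enum_ksets(1), where P = ?P])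
  have inv: "bij_betw (the_inv_into ?V (koszul_d n k)) (syz_piece n k d) ?V"
    using bij_betw_koszul_d_syz_piece[OF k] by (rule bij_betw_the_inv_into)
  have "linear_on (syz_piece n k d) (the_inv_into ?V (koszul_d n k))"
    by (rule linear_on_the_inv_into[OF subspace_standard_homog bij_betw_koszul_d_syz_piece[OF k]
          linear_on_koszul_d])
  then have lin: "linear_on (syz_piece n k d) (list_coords ?xs \<circ> the_inv_into ?V (koszul_d n k))"
    by (rule linear_on_comp[OF _ _ linear_on_list_coords[where V = ?V]]) (use inv in \<open>simp add: bij_betw_def\<close>)
  then show "\<exists>f. bij_betw f (syz_piece n k d)
      (dsum_piece (canonical_decomp n k :: ('a mpoly set \<times> int) list) d) \<and>
      linear_on (syz_piece n k d) f"
    by (intro exI[of _ "list_coords ?xs \<circ> the_inv_into ?V (koszul_d n k)"] conjI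
        bij_betw_trans[OF inv coords] lin)
qed

section \<open>Counting in degrees \<open>k\<close> and \<open>k + 1\<close>\<close>

lemma zero_in_piece: "graded_retract n S \<Longrightarrow> 0 \<in> piece S e"
  unfolding graded_retract_def piece_def using alg_gen.const[of 0] by auto

lemma one_in_piece_0: "graded_retract n S \<Longrightarrow> (1 :: 'a::field mpoly) \<in> piece S 0"
  unfolding graded_retract_def piece_def using alg_gen.const[of 1] homog_mpConst[of "1::'a"] by auto

lemma unit_vec_in_dsum_piece:
  assumes "\<forall>j<length D. graded_retract n (fst (D ! j))" "i < length D"
    and "p \<in> piece (fst (D ! i)) (d - snd (D ! i))"
  shows "unit_vec i p \<in> dsum_piece D d"
  using assms zero_in_piece by (auto simp: dsum_piece_def unit_vec_def)

lemma hilbert_decompE: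
  assumes "hilbert_decomp n k D"
  obtains f where "bij_betw f (syz_piece n k d) (dsum_piece D d)" "linear_on (syz_piece n k d) f"
  using assms unfolding hilbert_decomp_iff by blast

lemma syz_piece_below:
  assumes "1 \<le> k" "d < int k"
  shows "syz_piece n k d = {0 :: nat set \<Rightarrow> 'a::field mpoly}"
proof -
  have "b = 0" if "b \<in> (standard_homog n k (d - int k) :: (nat set \<Rightarrow> 'a mpoly) set)" for b
  proof (rule ext)
    fix J show "b J = 0 J"
      using that assms(2) homog_neg_eq_0[of "d - int k" "b J"] by (simp add: standard_homog_def)
  qed
  then have "standard_homog n k (d - int k) = {0 :: nat set \<Rightarrow> 'a mpoly}"
    using fun_space.subspace_0[OF subspace_standard_homog] by blast
  then show ?thesis
    by (simp add: syz_piece_eq_image[OF assms(1)])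
qed

lemma hilbert_decomp_shift_ge:
  assumes k: "1 \<le> k" and D: "hilbert_decomp n k (D :: ('a::field mpoly set \<times> int) list)"
    and i: "i < length D"
  shows "int k \<le> snd (D ! i)"
proof (rule ccontr)
  assume "\<not> int k \<le> snd (D ! i)"
  then have "syz_piece n k (snd (D ! i)) = {0 :: nat set \<Rightarrow> 'a mpoly}"
    by (intro syz_piece_below[OF k]) simp
  moreover obtain f where "bij_betw f (syz_piece n k (snd (D ! i))) (dsum_piece D (snd (D ! i)))"
    and "linear_on (syz_piece n k (snd (D ! i))) f"
    using D by (rule hilbert_decompE)
  ultimately have "dsum_piece D (snd (D ! i)) = {f 0}"
    by (simp add: bij_betw_def)
  moreover have retracts: "\<forall>j<length D. graded_retract n (fst (D ! j))"
    using D by (simp add: hilbert_decomp_iff)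
  then have gr: "graded_retract n (fst (D ! i))"
    using i by simp
  have "unit_vec i 1 \<in> dsum_piece D (snd (D ! i))" "unit_vec i 0 \<in> dsum_piece D (snd (D ! i))"
    using retracts i one_in_piece_0[OF gr] zero_in_piece[OF gr] by (auto intro!: unit_vec_in_dsum_piece)
  ultimately have "unit_vec i (1 :: 'a mpoly) i = unit_vec i 0 i" by simp
  then show False by (simp add: unit_vec_def)
qed

lemma dsum_piece_shift_subset_span:
  assumes k: "1 \<le> k" and D: "hilbert_decomp n k (D :: ('a::field mpoly set \<times> int) list)"
  shows "dsum_piece D (int k) \<subseteq>
           fun_space.span ((\<lambda>i. unit_vec i 1) ` {i. i < length D \<and> snd (D ! i) = int k})"
proof
  fix g assume g: "g \<in> dsum_piece D (int k)"
  define Q where "Q = {i. i < length D \<and> snd (D ! i) = int k}"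
  define c where "c j = Poly_Mapping.lookup (g j) 0" for j
  have gj: "g j = (if j \<in> Q then mpConst (c j) else 0)" for j
  proof (cases "j < length D")
    case True
    then have "homog (int k - snd (D ! j)) (g j)"
      using g by (simp add: dsum_piece_def piece_def)
    moreover have "int k \<le> snd (D ! j)"
      using hilbert_decomp_shift_ge[OF k D True] .
    ultimately show ?thesis
      using True homog_0_eq_mpConst homog_neg_eq_0[of "int k - snd (D ! j)"]
      by (cases "snd (D ! j) = int k") (auto simp: Q_def c_def)
  next
    case False
    then show ?thesis using g by (simp add: dsum_piece_def Q_def)
  qed
  have "finite Q" by (simp add: Q_def)
  then have "g = (\<Sum>i\<in>Q. unit_vec i (mpConst (c i)))"
    by (simp add: fun_eq_iff sum_unit_vec_apply gj)
  also have "\<dots> = (\<Sum>i\<in>Q. (\<lambda>j. mpConst (c i) * unit_vec i 1 j))"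
    by (simp add: unit_vec_scale[symmetric])
  also have "\<dots> \<in> fun_space.span ((\<lambda>i. unit_vec i 1) ` Q)"
    by (intro fun_space.span_sum fun_space.span_scale fun_space.span_base) auto
  finally show "g \<in> fun_space.span ((\<lambda>i. unit_vec i 1) ` {i. i < length D \<and> snd (D ! i) = int k})"
    by (simp add: Q_def)
qed

lemma hilbert_decomp_koszul_map:
  assumes k: "1 \<le> k" and D: "hilbert_decomp n k (D :: ('a::field mpoly set \<times> int) list)"
  shows "\<exists>F. bij_betw F (standard_homog n k (d - int k)) (dsum_piece D d) \<and>
             linear_on (standard_homog n k (d - int k)) F"
proof -
  obtain f where f: "bij_betw f (syz_piece n k d) (dsum_piece D d)" "linear_on (syz_piece n k d) f"
    using D by (rule hilbert_decompE)
  have d: "bij_betw (koszul_d n k) (standard_homog n k (d - int k)) (syz_piece n k d)"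
    by (rule bij_betw_koszul_d_syz_piece[OF k])
  have "linear_on (standard_homog n k (d - int k)) (f \<circ> koszul_d n k)"
    by (rule linear_on_comp[OF linear_on_koszul_d _ f(2)]) (simp add: bij_betw_imp_surj_on[OF d])
  then show ?thesis
    using bij_betw_trans[OF d f(1)] by blast
qed

lemma binomial_le_card_shift:
  assumes k: "1 \<le> k" and D: "hilbert_decomp n k (D :: ('a::field mpoly set \<times> int) list)"
  shows "n choose k \<le> card {i. i < length D \<and> snd (D ! i) = int k}"
proof -
  define Q where "Q = {i. i < length D \<and> snd (D ! i) = int k}"
  define V where "V = (standard_homog n k 0 :: (nat set \<Rightarrow> 'a mpoly) set)"
  obtain F where F: "bij_betw F V (dsum_piece D (int k))" "linear_on V F"
    using hilbert_decomp_koszul_map[OF k D, of "int k"] by (auto simp: V_def)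
  define E where "E = (\<lambda>J. unit_vec J (1 :: 'a mpoly)) ` ksets n k"
  have "E = (\<Union>J\<in>ksets n k. unit_vec J ` {1})"
    by (auto simp: E_def)
  then have indep: "fun_space.independent E"
    using independent_unit_vecs[of "ksets n k" "\<lambda>_. {1}"] by simp
  have E: "E \<subseteq> V"
    using vars_in_mpConst[of _ 1] homog_mpConst[of 1]
    by (auto simp: E_def V_def standard_homog_def standard_def unit_vec_def)
  have inj: "inj_on F V"
    using F(1) by (rule bij_betw_imp_inj_on)
  have "fun_space.independent (F ` E)"
    by (rule independent_image_linear_on[OF _ F(2) inj E indep]) (simp add: V_def subspace_standard_homog)
  moreover have "F ` E \<subseteq> fun_space.span ((\<lambda>i. unit_vec i 1) ` Q)"
    using F(1) E dsum_piece_shift_subset_span[OF k D] by (auto simp: bij_betw_def Q_def)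
  moreover have "finite Q" by (simp add: Q_def)
  ultimately have "card (F ` E) \<le> card ((\<lambda>i. unit_vec i (1 :: 'a mpoly)) ` Q)"
    using fun_space.independent_span_bound[OF finite_imageI] by blast
  also have "\<dots> \<le> card Q"
    using \<open>finite Q\<close> by (rule card_image_le)
  finally have "card (F ` E) \<le> card Q" .
  moreover have "card (F ` E) = card E"
    using inj_on_subset[OF inj E] by (rule card_image)
  moreover have "inj_on (\<lambda>J. unit_vec J (1 :: 'a mpoly)) (ksets n k)"
    by (rule inj_onI) (metis one_neq_zero unit_vec_def)
  then have "card E = n choose k"
    by (simp add: E_def card_image card_ksets)
  ultimately show ?thesis by (simp add: Q_def)
qed

definition pairs :: "nat \<Rightarrow> nat \<Rightarrow> (nat set \<times> nat) set" where
  "pairs n k = {(J, i). J \<in> ksets n k \<and> Min J \<le> i \<and> i < n}"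

lemma finite_pairs: "finite (pairs n k)"
  by (rule finite_subset[of _ "ksets n k \<times> {..<n}"]) (auto simp: pairs_def)

lemma standard_homog_1_subset_span:
  "standard_homog n k 1 \<subseteq> fun_space.span ((\<lambda>(J, i). unit_vec J (mpVar i)) ` pairs n k)"
proof
  fix b :: "nat set \<Rightarrow> 'a::field mpoly"
  assume b: "b \<in> standard_homog n k 1"
  let ?U = "(\<lambda>(J, i). unit_vec J (mpVar i :: 'a mpoly)) ` pairs n k"
  have "b = (\<Sum>J\<in>ksets n k. unit_vec J (b J))"
    using b by (auto simp: fun_eq_iff sum_unit_vec_apply standard_homog_def standard_def)
  also have "\<dots> \<in> fun_space.span ?U"
  proof (rule fun_space.span_sum)
    fix J assume J: "J \<in> ksets n k"
    define c where "c i = Poly_Mapping.lookup (b J) (mon_var i)" for i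
    have "b J = (\<Sum>i\<in>{Min J..<n}. mpConst (c i) * mpVar i)"
      unfolding c_def using b J
      by (intro homog_1_eq_linear_comb) (auto simp: standard_homog_def standard_def)
    then have "unit_vec J (b J) = (\<Sum>i\<in>{Min J..<n}. (\<lambda>I. mpConst (c i) * unit_vec J (mpVar i) I))"
      by (simp add: unit_vec_sum unit_vec_scale)
    also have "\<dots> \<in> fun_space.span ?U"
      using J by (intro fun_space.span_sum fun_space.span_scale fun_space.span_base)
        (auto simp: pairs_def image_iff)
    finally show "unit_vec J (b J) \<in> fun_space.span ?U" .
  qed
  finally show "b \<in> fun_space.span ?U" .
qed

lemma sum_retract_dim_le_card_pairs:
  assumes k: "1 \<le> k" and D: "hilbert_decomp n k (D :: ('a::field mpoly set \<times> int) list)"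
  shows "(\<Sum>i\<in>{i. i < length D \<and> snd (D ! i) = int k}. retract_dim (fst (D ! i))) \<le> card (pairs n k)"
proof -
  define Q where "Q = {i. i < length D \<and> snd (D ! i) = int k}"
  define V where "V = (standard_homog n k 1 :: (nat set \<Rightarrow> 'a mpoly) set)"
  define U where "U = (\<lambda>(J, i). unit_vec J (mpVar i :: 'a mpoly)) ` pairs n k"
  obtain F where F: "bij_betw F V (dsum_piece D (int k + 1))" "linear_on V F"
    using hilbert_decomp_koszul_map[OF k D, of "int k + 1"] by (auto simp: V_def)
  have "U \<subseteq> V"
    by (auto simp: U_def V_def pairs_def standard_homog_def unit_vec_def standard_def
        vars_in_mpVar homog_mpVar)
  have "dsum_piece D (int k + 1) = F ` V"
    using F(1) by (simp add: bij_betw_def)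
  also have "\<dots> \<subseteq> F ` fun_space.span U"
    unfolding U_def V_def by (rule image_mono[OF standard_homog_1_subset_span])
  also have "\<dots> \<subseteq> fun_space.span (F ` U)"
    by (rule linear_on_span_image[OF _ F(2) \<open>U \<subseteq> V\<close>]) (simp add: V_def subspace_standard_homog)
  finally have span: "dsum_piece D (int k + 1) \<subseteq> fun_space.span (F ` U)" .
  have "\<exists>B. B \<subseteq> piece (fst (D ! i)) 1 \<and> mpoly_space.independent B \<and>
      card B = retract_dim (fst (D ! i))" for i
  proof -
    obtain B where "B \<subseteq> piece (fst (D ! i)) 1" "mpoly_space.independent B"
      "piece (fst (D ! i)) 1 \<subseteq> mpoly_space.span B" "card B = mpoly_space.dim (piece (fst (D ! i)) 1)"
      by (rule mpoly_space.basis_exists)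
    then show ?thesis
      unfolding retract_dim_def by blast
  qed
  then obtain B where B: "\<And>i. B i \<subseteq> piece (fst (D ! i)) 1" "\<And>i. mpoly_space.independent (B i)"
    "\<And>i. card (B i) = retract_dim (fst (D ! i))"
    by metis
  define A where "A = (\<Union>i\<in>Q. unit_vec i ` B i)"
  have retracts: "\<forall>j<length D. graded_retract n (fst (D ! j))"
    using D by (simp add: hilbert_decomp_iff)
  have "A \<subseteq> dsum_piece D (int k + 1)"
  proof
    fix x assume "x \<in> A"
    then obtain i b where i: "i \<in> Q" "b \<in> B i" and x: "x = unit_vec i b"
      by (auto simp: A_def)
    have "unit_vec i b \<in> dsum_piece D (int k + 1)"
      using retracts i B(1)[of i] by (intro unit_vec_in_dsum_piece) (auto simp: Q_def)
    then show "x \<in> dsum_piece D (int k + 1)"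
      by (simp add: x)
  qed
  moreover have "fun_space.independent A"
    unfolding A_def using B(2) by (rule independent_unit_vecs)
  moreover have "finite (F ` U)"
    by (simp add: U_def finite_pairs)
  ultimately have finA: "finite A" and cardA: "card A \<le> card (F ` U)"
    using fun_space.independent_span_bound[OF \<open>finite (F ` U)\<close> _ subset_trans[OF _ span]] by blast+
  have "card (F ` U) \<le> card U"
    by (rule card_image_le) (simp add: U_def finite_pairs)
  also have "card U \<le> card (pairs n k)"
    unfolding U_def by (rule card_image_le[OF finite_pairs])
  finally have cardU: "card (F ` U) \<le> card (pairs n k)" .
  have "(\<Sum>i\<in>Q. retract_dim (fst (D ! i))) = card A"
    using card_Union_unit_vecs[OF finA[unfolded A_def] _ B(2)] B(3) by (simp add: A_def Q_def)
  also have "\<dots> \<le> card (pairs n k)"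
    using cardA cardU by simp
  finally show ?thesis by (simp add: Q_def)
qed

lemma bij_betw_insert_below_Min:
  assumes k: "1 \<le> k"
  shows "bij_betw (\<lambda>(J, i). insert i J) {(J, i). J \<in> ksets n k \<and> i < Min J} (ksets n (k + 1))"
proof (rule bij_betw_byWitness[where f' = "\<lambda>L. (L - {Min L}, Min L)"])
  have below: "i \<notin> J" "Min (insert i J) = i" if J: "J \<in> ksets n k" "i < Min J" for J i
  proof -
    have "finite J" using J(1) by (rule ksets_finite)
    then have iJ: "\<And>x. x \<in> J \<Longrightarrow> i < x" using J(2) by (meson Min_le less_le_trans)
    then show "i \<notin> J" by blast
    show "Min (insert i J) = i"
      using \<open>finite J\<close> iJ by (intro Min_eqI) (auto simp: less_imp_le)
  qed
  show "\<forall>a\<in>{(J, i). J \<in> ksets n k \<and> i < Min J}.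
      (\<lambda>L. (L - {Min L}, Min L)) ((\<lambda>(J, i). insert i J) a) = a"
  proof
    fix a assume "a \<in> {(J, i). J \<in> ksets n k \<and> i < Min J}"
    then obtain J i where a: "a = (J, i)" and J: "J \<in> ksets n k" "i < Min J"
      by blast
    then have "insert i J - {i} = J"
      using below(1)[OF J] by simp
    then show "(\<lambda>L. (L - {Min L}, Min L)) ((\<lambda>(J, i). insert i J) a) = a"
      using below(2)[OF J] a by simp
  qed
  show "(\<lambda>(J, i). insert i J) ` {(J, i). J \<in> ksets n k \<and> i < Min J} \<subseteq> ksets n (k + 1)"
  proof clarify
    fix J i assume J: "J \<in> ksets n k" "i < Min J"
    have "i < n" using Min_ksets_less[OF k J(1)] J(2) by simp
    moreover have "card (insert i J) = k + 1"
      using below(1)[OF J] ksets_finite[OF J(1)] J(1) by (simp add: ksets_def)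
    ultimately show "insert i J \<in> ksets n (k + 1)"
      using J(1) by (simp add: ksets_def)
  qed
  have Min_split: "finite L" "Min L \<in> L" "L - {Min L} \<in> ksets n k" if "L \<in> ksets n (k + 1)" for L
  proof -
    show "finite L" using that by (rule ksets_finite)
    moreover have "L \<noteq> {}" using ksets_nonempty[of "k + 1"] that by simp
    ultimately show "Min L \<in> L" by (rule Min_in)
    then show "L - {Min L} \<in> ksets n k"
      using that \<open>finite L\<close> by (auto simp: ksets_def)
  qed
  show "\<forall>L\<in>ksets n (k + 1). (\<lambda>(J, i). insert i J) ((\<lambda>L. (L - {Min L}, Min L)) L) = L"
    using Min_split(2) by (simp add: insert_absorb)
  show "(\<lambda>L. (L - {Min L}, Min L)) ` ksets n (k + 1) \<subseteq> {(J, i). J \<in> ksets n k \<and> i < Min J}"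
  proof
    fix a assume "a \<in> (\<lambda>L. (L - {Min L}, Min L)) ` ksets n (k + 1)"
    then obtain L where a: "a = (L - {Min L}, Min L)" and "L \<in> ksets n (k + 1)"
      by blast
    note L = Min_split[OF this(2)]
    have "L - {Min L} \<noteq> {}"
      using ksets_nonempty[OF k L(3)] .
    then have "Min (L - {Min L}) \<in> L - {Min L}"
      using L(1) by (intro Min_in) simp_all
    moreover have "Min L \<le> Min (L - {Min L})"
      using L(1) \<open>L - {Min L} \<noteq> {}\<close> by simp
    ultimately have "Min L < Min (L - {Min L})"
      by (metis DiffD2 insertI1 le_neq_implies_less)
    then show "a \<in> {(J, i). J \<in> ksets n k \<and> i < Min J}"
      using a L(3) by simp
  qed
qed

lemma card_pairs:
  assumes k: "1 \<le> k"
  shows "card (pairs n k) + (n choose (k + 1)) = n * (n choose k)"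
proof -
  define below where "below = {(J, i). J \<in> ksets n k \<and> i < Min J}"
  have union: "ksets n k \<times> {..<n} = pairs n k \<union> below"
    by (auto simp: pairs_def below_def dest: Min_ksets_less[OF k])
  then have "finite below"
    by (metis finite_SigmaI finite_Un finite_ksets finite_lessThan)
  have "(n choose k) * n = card (ksets n k \<times> {..<n})"
    by (simp add: card_cartesian_product card_ksets)
  also have "\<dots> = card (pairs n k) + card below"
    unfolding union using finite_pairs \<open>finite below\<close>
    by (rule card_Un_disjoint) (auto simp: pairs_def below_def)
  also have "card below = n choose (k + 1)"
    using bij_betw_same_card[OF bij_betw_insert_below_Min[OF k]] by (simp add: below_def card_ksets)
  finally show ?thesis
    by (simp add: mult.commute)
qed

lemma decomp_depth_bound:
  assumes k: "1 \<le> k" and D: "hilbert_decomp n k (D :: ('a::field mpoly set \<times> int) list)"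
  shows "(n choose k) * decomp_depth D + (n choose (k + 1)) \<le> n * (n choose k)"
proof -
  define Q where "Q = {i. i < length D \<and> snd (D ! i) = int k}"
  have dims: "{retract_dim (fst (D ! i)) | i. i < length D} = (\<lambda>i. retract_dim (fst (D ! i))) ` {..<length D}"
    by auto
  have depth_le: "decomp_depth D \<le> retract_dim (fst (D ! i))" if "i \<in> Q" for i
    unfolding decomp_depth_def dims by (rule Min_le) (use that in \<open>simp_all add: Q_def\<close>)
  have "(n choose k) * decomp_depth D \<le> card Q * decomp_depth D"
    using binomial_le_card_shift[OF k D] by (simp add: Q_def)
  also have "\<dots> \<le> (\<Sum>i\<in>Q. retract_dim (fst (D ! i)))"
    using sum_mono[of Q "\<lambda>_. decomp_depth D" "\<lambda>i. retract_dim (fst (D ! i))", OF depth_le] by simp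
  also have "\<dots> \<le> card (pairs n k)"
    unfolding Q_def by (rule sum_retract_dim_le_card_pairs[OF k D])
  finally show ?thesis
    using card_pairs[OF k, of n] by simp
qed

lemma binomial_Suc_mult: "(n choose (k + 1)) * (k + 1) = (n - k) * (n choose k)"
proof (cases n)
  case (Suc m)
  have "Suc m * (m choose k) = (Suc m choose Suc k) * Suc k" by (rule Suc_times_binomial_eq)
  moreover have "(Suc m - k) * (Suc m choose k) = Suc m * ((Suc m - 1) choose k)" by (rule binomial_absorb_comp)
  ultimately show ?thesis using Suc by simp
qed simp

lemma ceiling_bound_of_count:
  fixes C C' dep n k :: nat
  assumes "0 < C" and "C * dep + C' \<le> n * C" and "C' * (k + 1) = (n - k) * C"
  shows "int dep \<le> int n - \<lceil>real (n - k) / real (k + 1)\<rceil>"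
proof -
  have "(C * dep + C') * (k + 1) \<le> n * C * (k + 1)"
    using assms(2) by (rule mult_right_mono) simp
  then have "C * (dep * (k + 1) + (n - k)) \<le> C * (n * (k + 1))"
    using assms(3) by (simp add: algebra_simps)
  then have "dep * (k + 1) + (n - k) \<le> n * (k + 1)"
    using assms(1) by simp
  then have "real dep * real (k + 1) + real (n - k) \<le> real n * real (k + 1)"
    by (metis of_nat_add of_nat_le_iff of_nat_mult)
  then have "real (n - k) \<le> (real n - real dep) * real (k + 1)"
    by (simp add: algebra_simps)
  then have "real (n - k) / real (k + 1) \<le> real n - real dep"
    by (simp add: divide_le_eq)
  then have "\<lceil>real (n - k) / real (k + 1)\<rceil> \<le> int n - int dep"
    by (simp add: ceiling_le_iff)
  then show ?thesis
    by simp
qed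

theorem proposition3p6:
  fixes n k :: nat
  assumes "1 \<le> k" and "k < n div 2"
  shows "int (Hdepth1_syz TYPE('a::field) n k)
           \<le> int n - \<lceil>real (n - k) / real (k + 1)\<rceil>"
proof -
  define depths where "depths = {decomp_depth D | D :: ('a mpoly set \<times> int) list. hilbert_decomp n k D}"
  have C: "0 < n choose k" \<comment> \<open>the only use of \<open>k < n div 2\<close>: the argument needs just \<open>k \<le> n\<close>\<close>
    using assms(2) by simp
  have bound: "int x \<le> int n - \<lceil>real (n - k) / real (k + 1)\<rceil> \<and> x \<le> n" if x: "x \<in> depths" for x
  proof -
    obtain D :: "('a mpoly set \<times> int) list" where "hilbert_decomp n k D" "x = decomp_depth D"
      using x by (auto simp: depths_def)
    then have count: "(n choose k) * x + (n choose (k + 1)) \<le> n * (n choose k)"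
      using decomp_depth_bound[OF assms(1)] by blast
    then have "(n choose k) * x \<le> n * (n choose k)"
      by linarith
    then have "(n choose k) * x \<le> (n choose k) * n"
      by (simp only: mult.commute)
    then have "x \<le> n"
      using C by simp
    then show ?thesis
      using ceiling_bound_of_count[OF C count binomial_Suc_mult] by simp
  qed
  have "depths \<noteq> {}"
    using hilbert_decomp_canonical_decomp[OF assms(1)] by (auto simp: depths_def)
  moreover have "finite depths"
    using bound by (intro finite_subset[of depths "{..n}"]) auto
  ultimately show ?thesis
    using bound Max_in[of depths] by (simp add: Hdepth1_syz_def depths_def[symmetric])
qed

end
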